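(* There exists a unique unital *-homomorphism $\Delta:\mathcal{T}\to\mathcal{T}\otimes\mathcal{T}$ with $\Delta(T)=T\otimes T$; it satisfies $\Delta(T_{n,m})=T_{n,m}\otimes T_{n,m}$ for all $n,m\in\mathbb{Z}_+$ and is coassociative: $(\Delta\otimes\mathrm{id})\Delta=(\mathrm{id}\otimes\Delta)\Delta$. Hence $(\mathcal{T},\Delta)$ is a compact quantum semigroup.
   Context: Let $\ell^2(\mathbb{Z}_+)$ have orthonormal basis $(e_n)_{n\ge0}$, let $T$ be the unilateral shift $Te_n=e_{n+1}$, and let $\mathcal{T}$ be the norm-closed subalgebra of $B(\ell^2(\mathbb{Z}_+))$ generated by $T$ and $T^*$. $T_{n,m}=T^n(T^* )^m$. $\mathcal{T}\otimes\mathcal{T}$ denotes the minimal C*-tensor product. A compact quantum semigroup is a pair $(\mathcal{A},\Delta)$ where $\mathcal{A}$ is a unital C*-algebra and $\Delta:\mathcal{A}\to\mathcal{A}\otimes\mathcal{A}$ is a unital *-homomorphism satisfying $(\Delta\otimes\mathrm{id})\Delta=(\mathrm{id}\otimes\Delta)\Delta$. *)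

theory Defs
  imports "HOL-Analysis.Analysis"
begin

text \<open>A bounded operator on the Hilbert space l2(I) is represented by its
  matrix with respect to the standard orthonormal basis (e_i). Then l2(I) (x) l2(J) = l2(I x J),
  so the spatial (= minimal) tensor product of concrete C*-algebras is the norm closure of the
  linear span of Kronecker products of matrices.\<close>

type_synonym 'i opm = "'i \<Rightarrow> 'i \<Rightarrow> complex"

definition l2 :: "('i \<Rightarrow> complex) set" where
  "l2 = {x. (\<lambda>i. (cmod (x i))^2) summable_on UNIV}"

definition l2norm :: "('i \<Rightarrow> complex) \<Rightarrow> real" where
  "l2norm x = sqrt (infsum (\<lambda>i. (cmod (x i))^2) UNIV)"

definition mapply :: "'i opm \<Rightarrow> ('i \<Rightarrow> complex) \<Rightarrow> ('i \<Rightarrow> complex)" where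
  "mapply A x = (\<lambda>i. infsum (\<lambda>j. A i j * x j) UNIV)"

definition bounded_op :: "'i opm \<Rightarrow> bool" where
  "bounded_op A \<longleftrightarrow>
     (\<forall>x\<in>l2. \<forall>i. (\<lambda>j. A i j * x j) summable_on UNIV) \<and>
     (\<exists>K. \<forall>x\<in>l2. mapply A x \<in> l2 \<and> l2norm (mapply A x) \<le> K * l2norm x)"

definition opnorm :: "'i opm \<Rightarrow> real" where
  "opnorm A = Sup {l2norm (mapply A x) | x. x \<in> l2 \<and> l2norm x \<le> 1}"

definition madd :: "'i opm \<Rightarrow> 'i opm \<Rightarrow> 'i opm" where
  "madd A B = (\<lambda>i j. A i j + B i j)"

definition msmult :: "complex \<Rightarrow> 'i opm \<Rightarrow> 'i opm" where
  "msmult c A = (\<lambda>i j. c * A i j)"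

definition mzero :: "'i opm" where
  "mzero = (\<lambda>i j. 0)"

definition mid :: "'i opm" where
  "mid = (\<lambda>i j. if i = j then 1 else 0)"

definition mmult :: "'i opm \<Rightarrow> 'i opm \<Rightarrow> 'i opm" where
  "mmult A B = (\<lambda>i j. infsum (\<lambda>k. A i k * B k j) UNIV)"

definition madj :: "'i opm \<Rightarrow> 'i opm" where
  "madj A = (\<lambda>i j. cnj (A j i))"

fun mpow :: "'i opm \<Rightarrow> nat \<Rightarrow> 'i opm" where
  "mpow A 0 = mid"
| "mpow A (Suc n) = mmult A (mpow A n)"

definition mtensor :: "'i opm \<Rightarrow> 'j opm \<Rightarrow> ('i \<times> 'j) opm" where
  "mtensor A B = (\<lambda>(i, j) (k, l). A i k * B j l)"

definition massoc :: "('i \<times> ('j \<times> 'k)) opm \<Rightarrow> (('i \<times> 'j) \<times> 'k) opm" where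
  "massoc M = (\<lambda>((a, b), c) ((a', b'), c'). M (a, (b, c)) (a', (b', c')))"

inductive_set closed_alg :: "'i opm set \<Rightarrow> 'i opm set" for G where
  gen: "a \<in> G \<Longrightarrow> a \<in> closed_alg G"
| add: "a \<in> closed_alg G \<Longrightarrow> b \<in> closed_alg G \<Longrightarrow> madd a b \<in> closed_alg G"
| smult: "a \<in> closed_alg G \<Longrightarrow> msmult c a \<in> closed_alg G"
| mult: "a \<in> closed_alg G \<Longrightarrow> b \<in> closed_alg G \<Longrightarrow> mmult a b \<in> closed_alg G"
| lim: "(\<And>n. f n \<in> closed_alg G) \<Longrightarrow> bounded_op a \<Longrightarrow>
        (\<lambda>n. opnorm (madd (f n) (msmult (-1) a))) \<longlonglongrightarrow> 0 \<Longrightarrow> a \<in> closed_alg G"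

inductive_set closed_span :: "'i opm set \<Rightarrow> 'i opm set" for G where
  gen: "a \<in> G \<Longrightarrow> a \<in> closed_span G"
| zero: "mzero \<in> closed_span G"
| add: "a \<in> closed_span G \<Longrightarrow> b \<in> closed_span G \<Longrightarrow> madd a b \<in> closed_span G"
| smult: "a \<in> closed_span G \<Longrightarrow> msmult c a \<in> closed_span G"
| lim: "(\<And>n. f n \<in> closed_span G) \<Longrightarrow> bounded_op a \<Longrightarrow>
        (\<lambda>n. opnorm (madd (f n) (msmult (-1) a))) \<longlonglongrightarrow> 0 \<Longrightarrow> a \<in> closed_span G"

definition ctensor :: "'i opm set \<Rightarrow> 'j opm set \<Rightarrow> ('i \<times> 'j) opm set" where
  "ctensor A B = closed_span {mtensor a b | a b. a \<in> A \<and> b \<in> B}"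

definition unital_star_hom :: "'i opm set \<Rightarrow> 'j opm set \<Rightarrow> ('i opm \<Rightarrow> 'j opm) \<Rightarrow> bool" where
  "unital_star_hom A B h \<longleftrightarrow>
     (\<forall>a\<in>A. h a \<in> B) \<and>
     (\<forall>a\<in>A. \<forall>b\<in>A. h (madd a b) = madd (h a) (h b)) \<and>
     (\<forall>a\<in>A. \<forall>c. h (msmult c a) = msmult c (h a)) \<and>
     (\<forall>a\<in>A. \<forall>b\<in>A. h (mmult a b) = mmult (h a) (h b)) \<and>
     (\<forall>a\<in>A. h (madj a) = madj (h a)) \<and>
     h mid = mid"

definition shiftM :: "nat opm" where
  "shiftM = (\<lambda>i j. if i = Suc j then 1 else 0)"

definition Toeplitz :: "nat opm set" where
  "Toeplitz = closed_alg {shiftM, madj shiftM}"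

definition Tnm :: "nat \<Rightarrow> nat \<Rightarrow> nat opm" where
  "Tnm n m = mmult (mpow shiftM n) (mpow (madj shiftM) m)"

end

theory Submission
  imports Defs
begin

text \<open>
  Given a bijection \<rho> : A \<rightarrow> B \<times> D, the amplification
  ampl \<rho> X is the operator X \<otimes> 1 on l2(B) \<otimes> l2(D), transported to l2(A) along \<rho>.
  Amplification is a unital *-homomorphism which does not increase the operator norm, hence
  it maps norm-closed linear spans into norm-closed linear spans.

  The coordinates \<sigma>(i,j) = (min i j, i - j) identify N \<times> N with N \<times> Z, and in these
  coordinates T \<otimes> T acts as T \<otimes> 1.  So \<Delta> = ampl \<sigma> is a unital *-homomorphism with
  \<Delta>(T) = T \<otimes> T; a direct computation gives \<Delta>(T_{n,m}) = T_{n,m} \<otimes> T_{n,m}.  Because the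
  T_{n,m} are closed under multiplication, the Toeplitz algebra lies in their closed span,
  so \<Delta> takes values in the minimal tensor product.  Uniqueness uses the matrix units
  E_{ij} = T_{i,j} - T_{i+1,j+1}: any unital *-homomorphism agreeing with \<Delta> on T agrees on
  them, and the entries of the image of x are recovered from E_{ii} x E_{jj} = x_{ij} E_{ij}.
  Finally \<Delta> \<otimes> id and id \<otimes> \<Delta> are again amplifications, and coassociativity is an
  identity between index maps.
\<close>

lemma l2_zero[simp]: "(\<lambda>_. 0) \<in> l2"
  by (simp add: l2_def)

lemma l2norm_zero[simp]: "l2norm (\<lambda>_. 0) = 0"
  by (simp add: l2norm_def)

lemma l2norm_nonneg: "l2norm x \<ge> 0"
  by (simp add: l2norm_def infsum_nonneg)

lemma l2norm_sq: "(l2norm x)^2 = infsum (\<lambda>i. (cmod (x i))^2) UNIV"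
  by (simp add: l2norm_def infsum_nonneg)

lemma l2_scale: "x \<in> l2 \<Longrightarrow> (\<lambda>i. c * x i) \<in> l2"
  unfolding l2_def by (simp add: norm_mult power_mult_distrib summable_on_cmult_right)

lemma l2norm_scale: "l2norm (\<lambda>i. c * x i) = cmod c * l2norm x"
proof -
  have "infsum (\<lambda>i. (cmod (c * x i))^2) UNIV = (cmod c)^2 * infsum (\<lambda>i. (cmod (x i))^2) UNIV"
    by (simp add: norm_mult power_mult_distrib infsum_cmult_right')
  then show ?thesis unfolding l2norm_def by (simp add: real_sqrt_mult)
qed

text \<open>l2 is closed under addition, using (x+y)^2 \<le> 2x^2 + 2y^2 pointwise.\<close>
lemma l2_add: assumes "x \<in> l2" "y \<in> l2" shows "(\<lambda>i. x i + y i) \<in> l2"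
proof -
  have s: "(\<lambda>i. 2 * (cmod (x i))^2 + 2 * (cmod (y i))^2) summable_on UNIV"
    using assms unfolding l2_def by (intro summable_on_add summable_on_cmult_right) auto
  have "(cmod (x i + y i))^2 \<le> 2 * (cmod (x i))^2 + 2 * (cmod (y i))^2" for i
  proof -
    have "cmod (x i + y i) \<le> cmod (x i) + cmod (y i)" by (rule norm_triangle_ineq)
    hence "(cmod (x i + y i))^2 \<le> (cmod (x i) + cmod (y i))^2"
      by (simp add: power_mono)
    also have "\<dots> \<le> 2 * (cmod (x i))^2 + 2 * (cmod (y i))^2"
      proof -
      have "0 \<le> (cmod (x i) - cmod (y i))^2" by simp
      then show ?thesis by (simp add: power2_sum power2_diff)
    qed
    finally show ?thesis .
  qed
  then show ?thesis unfolding l2_def mem_Collect_eq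
    by (intro summable_on_comparison_test[OF s]) auto
qed

lemma finite_sum_le_l2norm_sq:
  assumes "x \<in> l2" "finite F"
  shows "(\<Sum>i\<in>F. (cmod (x i))^2) \<le> (l2norm x)^2"
  unfolding l2norm_sq using assms unfolding l2_def
  by (intro finite_sum_le_infsum) auto

lemma L2_set_le_l2norm:
  assumes "x \<in> l2" "finite F"
  shows "L2_set (\<lambda>i. cmod (x i)) F \<le> l2norm x"
  unfolding L2_set_def using real_sqrt_le_mono[OF finite_sum_le_l2norm_sq[OF assms]] l2norm_nonneg[of x]
  by simp

text \<open>The triangle inequality for the l2 norm, obtained from the finite-dimensional one.\<close>
lemma l2_minkowski:
  assumes "x \<in> l2" "y \<in> l2"
  shows "l2norm (\<lambda>i. x i + y i) \<le> l2norm x + l2norm y"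
proof -
  have "infsum (\<lambda>i. (cmod (x i + y i))^2) UNIV \<le> (l2norm x + l2norm y)^2"
  proof (rule infsum_le_finite_sums)
    show "(\<lambda>i. (cmod (x i + y i))^2) summable_on UNIV"
      using l2_add[OF assms] by (simp add: l2_def)
    fix F :: "'a set" assume F: "finite F"
    have "L2_set (\<lambda>i. cmod (x i + y i)) F \<le> L2_set (\<lambda>i. cmod (x i) + cmod (y i)) F"
      by (rule L2_set_mono) (auto simp: norm_triangle_ineq)
    also have "\<dots> \<le> L2_set (\<lambda>i. cmod (x i)) F + L2_set (\<lambda>i. cmod (y i)) F"
      by (rule L2_set_triangle_ineq)
    also have "\<dots> \<le> l2norm x + l2norm y"
      using L2_set_le_l2norm[OF assms(1) F] L2_set_le_l2norm[OF assms(2) F] by simp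
    finally have "(L2_set (\<lambda>i. cmod (x i + y i)) F)^2 \<le> (l2norm x + l2norm y)^2"
      by (simp add: power_mono)
    then show "(\<Sum>i\<in>F. (cmod (x i + y i))^2) \<le> (l2norm x + l2norm y)^2"
      by (simp add: L2_set_def sum_nonneg)
  qed
  then have "sqrt (infsum (\<lambda>i. (cmod (x i + y i))^2) UNIV) \<le> sqrt ((l2norm x + l2norm y)^2)"
    by (rule real_sqrt_le_mono)
  then show ?thesis unfolding l2norm_def[of "\<lambda>i. x i + y i"]
    using l2norm_nonneg[of x] l2norm_nonneg[of y] by simp
qed

lemma l2_component_le:
  assumes "x \<in> l2" shows "cmod (x i) \<le> l2norm x"
proof -
  have "(\<Sum>j\<in>{i}. (cmod (x j))^2) \<le> (l2norm x)^2"
    by (rule finite_sum_le_l2norm_sq[OF assms]) auto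
  then have "(cmod (x i))^2 \<le> (l2norm x)^2" by simp
  then show ?thesis using l2norm_nonneg[of x] by (rule power2_le_imp_le)
qed

lemma l2norm_eq_0: assumes "x \<in> l2" "l2norm x = 0" shows "x = (\<lambda>_. 0)"
proof
  fix i show "x i = 0" using l2_component_le[OF assms(1), of i] assms(2) by simp
qed

lemma mapply_zero[simp]: "mapply A (\<lambda>_. 0) = (\<lambda>_. 0)"
  by (simp add: mapply_def)

lemma mapply_scale: "mapply A (\<lambda>j. c * x j) = (\<lambda>i. c * mapply A x i)"
proof
  fix i
  have "(\<lambda>j. A i j * (c * x j)) = (\<lambda>j. c * (A i j * x j))" by (simp add: algebra_simps)
  then show "mapply A (\<lambda>j. c * x j) i = c * mapply A x i"
    unfolding mapply_def by (simp add: infsum_cmult_right')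
qed

lemma bounded_summable: "bounded_op A \<Longrightarrow> x \<in> l2 \<Longrightarrow> (\<lambda>j. A i j * x j) summable_on UNIV"
  unfolding bounded_op_def by blast

lemma bounded_mapply_l2: "bounded_op A \<Longrightarrow> x \<in> l2 \<Longrightarrow> mapply A x \<in> l2"
  unfolding bounded_op_def by blast

lemma mapply_add:
  assumes "bounded_op A" "x \<in> l2" "y \<in> l2"
  shows "mapply A (\<lambda>j. x j + y j) = (\<lambda>i. mapply A x i + mapply A y i)"
proof
  fix i
  have "(\<lambda>j. A i j * (x j + y j)) = (\<lambda>j. A i j * x j + A i j * y j)" by (simp add: algebra_simps)
  then show "mapply A (\<lambda>j. x j + y j) i = mapply A x i + mapply A y i"
    unfolding mapply_def using bounded_summable[OF assms(1,2)] bounded_summable[OF assms(1,3)]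
    by (simp add: infsum_add)
qed

lemma opnorm_set_bdd:
  assumes "bounded_op A"
  shows "bdd_above {l2norm (mapply A x) | x. x \<in> l2 \<and> l2norm x \<le> 1}"
proof -
  obtain K where K: "\<forall>x\<in>l2. mapply A x \<in> l2 \<and> l2norm (mapply A x) \<le> K * l2norm x"
    using assms unfolding bounded_op_def by blast
  show ?thesis
  proof (rule bdd_aboveI)
    fix r assume "r \<in> {l2norm (mapply A x) | x. x \<in> l2 \<and> l2norm x \<le> 1}"
    then obtain x where x: "x \<in> l2" "l2norm x \<le> 1" "r = l2norm (mapply A x)" by blast
    have "r \<le> K * l2norm x" using K x by auto
    also have "\<dots> \<le> max K 0 * l2norm x" using l2norm_nonneg[of x] by (simp add: mult_right_mono)
    also have "\<dots> \<le> max K 0" using x(2) l2norm_nonneg[of x] by (simp add: mult_left_le)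
    finally show "r \<le> max K 0" .
  qed
qed

lemma opnorm_upper:
  assumes "bounded_op A" "x \<in> l2" "l2norm x \<le> 1"
  shows "l2norm (mapply A x) \<le> opnorm A"
  unfolding opnorm_def using assms by (intro cSup_upper opnorm_set_bdd) auto

lemma opnorm_nonneg: "bounded_op A \<Longrightarrow> 0 \<le> opnorm A"
  using opnorm_upper[of A "\<lambda>_. 0"] by simp

lemma opnorm_bound:
  assumes "bounded_op A" "x \<in> l2"
  shows "l2norm (mapply A x) \<le> opnorm A * l2norm x"
proof (cases "l2norm x = 0")
  case True
  then have "x = (\<lambda>_. 0)" using l2norm_eq_0 assms(2) by blast
  then show ?thesis by simp
next
  case False
  define n where "n = l2norm x"
  have n: "n > 0" using False l2norm_nonneg[of x] n_def by simp
  define y where "y = (\<lambda>j. complex_of_real (1/n) * x j)"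
  have y: "y \<in> l2" unfolding y_def by (rule l2_scale[OF assms(2)])
  have ny: "l2norm y = 1" unfolding y_def l2norm_scale using n n_def by (simp add: norm_divide)
  have "l2norm (mapply A y) = (1/n) * l2norm (mapply A x)"
    unfolding y_def mapply_scale l2norm_scale using n by (simp add: norm_divide)
  then have "(1/n) * l2norm (mapply A x) \<le> opnorm A"
    using opnorm_upper[OF assms(1) y] ny by simp
  then show ?thesis using n unfolding n_def[symmetric] by (simp add: field_simps)
qed

lemma opnorm_le:
  assumes "\<And>x. x \<in> l2 \<Longrightarrow> l2norm (mapply A x) \<le> M * l2norm x" "0 \<le> M"
  shows "opnorm A \<le> M"
  unfolding opnorm_def
proof (rule cSup_least)
  show "{l2norm (mapply A x) | x. x \<in> l2 \<and> l2norm x \<le> 1} \<noteq> {}"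
  proof -
    have "l2norm (mapply A (\<lambda>_. 0)) \<in> {l2norm (mapply A x) | x. x \<in> l2 \<and> l2norm x \<le> 1}"
      by (intro CollectI exI[of _ "\<lambda>_. 0"]) simp
    then show ?thesis by blast
  qed
next
  fix r assume "r \<in> {l2norm (mapply A x) | x. x \<in> l2 \<and> l2norm x \<le> 1}"
  then obtain x where x: "x \<in> l2" "l2norm x \<le> 1" "r = l2norm (mapply A x)" by blast
  have "r \<le> M * l2norm x" using assms(1) x by auto
  also have "\<dots> \<le> M" using x(2) assms(2) l2norm_nonneg[of x] by (simp add: mult_left_le)
  finally show "r \<le> M" .
qed

lemma bounded_opI:
  assumes "\<And>x i. x \<in> l2 \<Longrightarrow> (\<lambda>j. A i j * x j) summable_on UNIV"
    and "\<And>x. x \<in> l2 \<Longrightarrow> mapply A x \<in> l2"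
    and "\<And>x. x \<in> l2 \<Longrightarrow> l2norm (mapply A x) \<le> K * l2norm x"
  shows "bounded_op A"
  unfolding bounded_op_def using assms by blast

lemma mapply_madd:
  assumes "bounded_op a" "bounded_op b" "x \<in> l2"
  shows "mapply (madd a b) x = (\<lambda>i. mapply a x i + mapply b x i)"
proof
  fix i
  have "(\<lambda>j. madd a b i j * x j) = (\<lambda>j. a i j * x j + b i j * x j)"
    by (simp add: madd_def algebra_simps)
  then show "mapply (madd a b) x i = mapply a x i + mapply b x i"
    unfolding mapply_def using bounded_summable[OF assms(1,3)] bounded_summable[OF assms(2,3)]
    by (simp add: infsum_add)
qed

lemma bounded_madd:
  assumes "bounded_op a" "bounded_op b"
  shows "bounded_op (madd a b)"
proof (rule bounded_opI)
  fix x :: "'a \<Rightarrow> complex" and i assume x: "x \<in> l2"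
  have "(\<lambda>j. madd a b i j * x j) = (\<lambda>j. a i j * x j + b i j * x j)"
    by (simp add: madd_def algebra_simps)
  then show "(\<lambda>j. madd a b i j * x j) summable_on UNIV"
    using bounded_summable[OF assms(1) x] bounded_summable[OF assms(2) x]
    by (simp add: summable_on_add)
next
  fix x :: "'a \<Rightarrow> complex" assume x: "x \<in> l2"
  show "mapply (madd a b) x \<in> l2" unfolding mapply_madd[OF assms x]
    by (intro l2_add bounded_mapply_l2 assms x)
  have "l2norm (mapply (madd a b) x) \<le> l2norm (mapply a x) + l2norm (mapply b x)"
    unfolding mapply_madd[OF assms x]
    by (intro l2_minkowski bounded_mapply_l2 assms x)
  also have "\<dots> \<le> opnorm a * l2norm x + opnorm b * l2norm x"
    using opnorm_bound[OF assms(1) x] opnorm_bound[OF assms(2) x] by simp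
  finally show "l2norm (mapply (madd a b) x) \<le> (opnorm a + opnorm b) * l2norm x"
    by (simp add: algebra_simps)
qed

lemma mapply_msmult: "mapply (msmult c a) x = (\<lambda>i. c * mapply a x i)"
proof
  fix i
  have "(\<lambda>j. msmult c a i j * x j) = (\<lambda>j. c * (a i j * x j))"
    by (simp add: msmult_def algebra_simps)
  then show "mapply (msmult c a) x i = c * mapply a x i"
    unfolding mapply_def by (simp add: infsum_cmult_right')
qed

lemma bounded_msmult:
  assumes "bounded_op a"
  shows "bounded_op (msmult c a)"
proof (rule bounded_opI)
  fix x :: "'a \<Rightarrow> complex" and i assume x: "x \<in> l2"
  have "(\<lambda>j. msmult c a i j * x j) = (\<lambda>j. c * (a i j * x j))"
    by (simp add: msmult_def algebra_simps)
  then show "(\<lambda>j. msmult c a i j * x j) summable_on UNIV"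
    using bounded_summable[OF assms(1) x] by (simp add: summable_on_cmult_right)
next
  fix x :: "'a \<Rightarrow> complex" assume x: "x \<in> l2"
  show "mapply (msmult c a) x \<in> l2" unfolding mapply_msmult
    by (intro l2_scale bounded_mapply_l2 assms x)
  have "l2norm (mapply (msmult c a) x) = cmod c * l2norm (mapply a x)"
    unfolding mapply_msmult l2norm_scale ..
  also have "\<dots> \<le> cmod c * (opnorm a * l2norm x)"
    using opnorm_bound[OF assms(1) x] by (simp add: mult_left_mono)
  finally show "l2norm (mapply (msmult c a) x) \<le> (cmod c * opnorm a) * l2norm x"
    by (simp add: algebra_simps)
qed

lemma bounded_mzero: "bounded_op mzero"
  by (rule bounded_opI[where K=0]) (auto simp: mzero_def mapply_def)

section \<open>Composition of bounded operators\<close>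

definition restr :: "'i set \<Rightarrow> ('i \<Rightarrow> complex) \<Rightarrow> ('i \<Rightarrow> complex)" where
  "restr S x = (\<lambda>k. if k \<in> S then x k else 0)"

lemma l2_restr: assumes "x \<in> l2" shows "restr S x \<in> l2"
  using assms unfolding l2_def mem_Collect_eq restr_def
  by (rule summable_on_comparison_test) auto

lemma infsum_restr:
  fixes f :: "'a \<Rightarrow> 'b::{comm_monoid_add, t2_space}"
  shows "infsum (\<lambda>k. if k \<in> S then f k else 0) UNIV = infsum f S"
  by (rule infsum_cong_neutral) auto

lemma summable_restr:
  fixes f :: "'a \<Rightarrow> 'b::{comm_monoid_add, topological_space}"
  shows "(\<lambda>k. if k \<in> S then f k else 0) summable_on UNIV \<longleftrightarrow> f summable_on S"
  by (rule summable_on_cong_neutral) auto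

lemma l2_finite_supp: assumes "finite F" "\<And>k. k \<notin> F \<Longrightarrow> x k = 0" shows "x \<in> l2"
proof -
  have "(\<lambda>k. if k \<in> F then (cmod (x k))^2 else 0) summable_on UNIV"
    unfolding summable_restr using assms(1) by simp
  moreover have "(\<lambda>k. if k \<in> F then (cmod (x k))^2 else 0) = (\<lambda>k. (cmod (x k))^2)"
    using assms(2) by auto
  ultimately show ?thesis unfolding l2_def by simp
qed

lemma restr_split: "u = (\<lambda>k. restr F u k + restr (-F) u k)"
  by (auto simp: restr_def)

definition delta :: "'i \<Rightarrow> ('i \<Rightarrow> complex)" where
  "delta k = (\<lambda>j. if j = k then 1 else 0)"

lemma l2_delta: "delta k \<in> l2"
  by (rule l2_finite_supp[of "{k}"]) (auto simp: delta_def)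

lemma infsum_single_pt:
  fixes f :: "'a \<Rightarrow> 'b::{comm_monoid_add, t2_space}"
  assumes "\<And>j. j \<noteq> k \<Longrightarrow> f j = 0"
  shows "infsum f UNIV = f k"
proof -
  have "infsum f UNIV = infsum f {k}" by (rule infsum_cong_neutral) (auto simp: assms)
  then show ?thesis by simp
qed

lemma summable_single_pt:
  fixes f :: "'a \<Rightarrow> 'b::{comm_monoid_add, t2_space}"
  assumes "\<And>j. j \<noteq> k \<Longrightarrow> f j = 0"
  shows "f summable_on UNIV"
proof -
  have "f summable_on {k}" by simp
  moreover have "(f summable_on {k}) = (f summable_on UNIV)" by (rule summable_on_cong_neutral) (auto simp: assms)
  ultimately show ?thesis by simp
qed

text \<open>The columns of a bounded matrix are the images of basis vectors, hence
  square-summable.\<close>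
lemma mapply_delta: "mapply b (delta k) = (\<lambda>j. b j k)"
  unfolding mapply_def delta_def by (intro ext, subst infsum_single_pt[where k=k]) auto

lemma col_l2: "bounded_op b \<Longrightarrow> (\<lambda>j. b j k) \<in> l2"
  using bounded_mapply_l2[OF _ l2_delta, of b k] by (simp add: mapply_delta)

lemma infsum_finite_sum:
  fixes f :: "'k \<Rightarrow> 'a \<Rightarrow> 'c::{topological_comm_monoid_add, t2_space}"
  assumes "finite F" "\<And>k. k \<in> F \<Longrightarrow> f k summable_on A"
  shows "(\<lambda>j. \<Sum>k\<in>F. f k j) summable_on A \<and> infsum (\<lambda>j. \<Sum>k\<in>F. f k j) A = (\<Sum>k\<in>F. infsum (f k) A)"
  using assms
proof (induction F rule: finite_induct)
  case empty then show ?case by simp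
next
  case (insert k F)
  then have s1: "(\<lambda>j. \<Sum>k\<in>F. f k j) summable_on A" and e1: "infsum (\<lambda>j. \<Sum>k\<in>F. f k j) A = (\<Sum>k\<in>F. infsum (f k) A)"
    and s2: "f k summable_on A" by auto
  show ?case using insert(1,2) s1 s2 e1 by (simp add: summable_on_add infsum_add)
qed

lemma mapply_restr_finite:
  assumes "finite F"
  shows "mapply b (restr F u) = (\<lambda>j. \<Sum>k\<in>F. b j k * u k)"
proof
  fix j
  have "mapply b (restr F u) j = infsum (\<lambda>k. if k \<in> F then b j k * u k else 0) UNIV"
    unfolding mapply_def restr_def by (intro infsum_cong) auto
  also have "\<dots> = (\<Sum>k\<in>F. b j k * u k)" unfolding infsum_restr using assms by simp
  finally show "mapply b (restr F u) j = (\<Sum>k\<in>F. b j k * u k)" .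
qed

lemma l2norm_restr_tendsto:
  assumes "u \<in> l2"
  shows "((\<lambda>F. l2norm (restr (-F) u)) \<longlongrightarrow> 0) (finite_subsets_at_top UNIV)"
proof -
  define g where "g = (\<lambda>i. (cmod (u i))^2)"
  have sg: "g summable_on UNIV" using assms by (simp add: l2_def g_def)
  have eq: "l2norm (restr (-F) u) = sqrt (infsum g UNIV - sum g F)" if "finite F" for F
  proof -
    have "infsum (\<lambda>i. (cmod (restr (-F) u i))^2) UNIV = infsum (\<lambda>i. if i \<in> -F then g i else 0) UNIV"
      by (intro infsum_cong) (auto simp: restr_def g_def)
    also have "\<dots> = infsum g (-F)" by (rule infsum_restr)
    finally have 1: "infsum (\<lambda>i. (cmod (restr (-F) u i))^2) UNIV = infsum g (-F)" .
    have "infsum g UNIV = infsum g (F \<union> -F)" by simp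
    also have "\<dots> = infsum g F + infsum g (-F)"
      by (rule infsum_Un_disjoint) (use sg that in \<open>auto intro: summable_on_subset_banach\<close>)
    finally show ?thesis unfolding l2norm_def 1 using that by simp
  qed
  have "(sum g \<longlongrightarrow> infsum g UNIV) (finite_subsets_at_top UNIV)"
    using has_sum_infsum[OF sg] unfolding has_sum_def .
  then have "((\<lambda>F. sqrt (infsum g UNIV - sum g F)) \<longlongrightarrow> sqrt (infsum g UNIV - infsum g UNIV)) (finite_subsets_at_top UNIV)"
    by (intro tendsto_intros)
  then have "((\<lambda>F. sqrt (infsum g UNIV - sum g F)) \<longlongrightarrow> 0) (finite_subsets_at_top UNIV)" by simp
  then show ?thesis
    by (rule Lim_transform_eventually)
       (auto simp: eq eventually_finite_subsets_at_top_weakI)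
qed

text \<open>This is what makes matrix products compute composition.\<close>
lemma bounded_functional_has_sum:
  fixes \<phi> :: "('i \<Rightarrow> complex) \<Rightarrow> complex"
  assumes u: "u \<in> l2"
    and bnd: "\<And>w. w \<in> l2 \<Longrightarrow> cmod (\<phi> w) \<le> C * l2norm w"
    and split: "\<And>F. \<phi> u = \<phi> (restr F u) + \<phi> (restr (-F) u)"
    and fin: "\<And>F. finite F \<Longrightarrow> \<phi> (restr F u) = (\<Sum>k\<in>F. c k * u k)"
  shows "((\<lambda>k. c k * u k) has_sum \<phi> u) UNIV"
proof -
  have tail: "((\<lambda>F. \<phi> (restr (-F) u)) \<longlongrightarrow> 0) (finite_subsets_at_top UNIV)"
  proof (rule Lim_null_comparison)
    show "\<forall>\<^sub>F F in finite_subsets_at_top UNIV. norm (\<phi> (restr (-F) u)) \<le> C * l2norm (restr (-F) u)"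
      by (intro always_eventually allI bnd l2_restr u)
    show "((\<lambda>F. C * l2norm (restr (-F) u)) \<longlongrightarrow> 0) (finite_subsets_at_top UNIV)"
      using tendsto_mult_right_zero[OF l2norm_restr_tendsto[OF u], of C] by simp
  qed
  have "((\<lambda>F. \<phi> u - \<phi> (restr (-F) u)) \<longlongrightarrow> \<phi> u - 0) (finite_subsets_at_top UNIV)"
    by (intro tendsto_intros tail)
  then have "((\<lambda>F. \<phi> u - \<phi> (restr (-F) u)) \<longlongrightarrow> \<phi> u) (finite_subsets_at_top UNIV)" by simp
  moreover have "\<phi> u - \<phi> (restr (-F) u) = (\<Sum>k\<in>F. c k * u k)" if "finite F" for F
    using split[of F] fin[OF that] by simp
  ultimately have "(sum (\<lambda>k. c k * u k) \<longlongrightarrow> \<phi> u) (finite_subsets_at_top UNIV)"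
    by (auto elim!: Lim_transform_eventually intro!: eventually_finite_subsets_at_top_weakI)
  then show ?thesis unfolding has_sum_def .
qed

lemma mmult_has_sum:
  assumes a: "bounded_op a" and b: "bounded_op b" and u: "u \<in> l2"
  shows "((\<lambda>k. mmult a b i k * u k) has_sum mapply a (mapply b u) i) UNIV"
proof -
  define \<phi> where "\<phi> w = mapply a (mapply b w) i" for w
  have bnd: "cmod (\<phi> w) \<le> (opnorm a * opnorm b) * l2norm w" if w: "w \<in> l2" for w
  proof -
    have "cmod (\<phi> w) \<le> l2norm (mapply a (mapply b w))" unfolding \<phi>_def
      by (intro l2_component_le bounded_mapply_l2 a b w)
    also have "\<dots> \<le> opnorm a * l2norm (mapply b w)"
      by (intro opnorm_bound a bounded_mapply_l2 b w)
    also have "\<dots> \<le> opnorm a * (opnorm b * l2norm w)"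
      by (intro mult_left_mono opnorm_bound b w opnorm_nonneg a)
    finally show ?thesis by (simp add: mult.assoc)
  qed
  have fin: "\<phi> (restr F u) = (\<Sum>k\<in>F. mmult a b i k * u k)" if F: "finite F" for F
  proof -
    have sk: "(\<lambda>j. a i j * b j k * u k) summable_on UNIV" for k
      using bounded_summable[OF a col_l2[OF b, of k], of i] by (intro summable_on_cmult_left)
    have "\<phi> (restr F u) = infsum (\<lambda>j. \<Sum>k\<in>F. a i j * b j k * u k) UNIV"
      unfolding \<phi>_def mapply_restr_finite[OF F] mapply_def[of a]
      by (simp add: sum_distrib_left mult.assoc)
    also have "\<dots> = (\<Sum>k\<in>F. infsum (\<lambda>j. a i j * b j k * u k) UNIV)"
      using infsum_finite_sum[OF F, of "\<lambda>k j. a i j * b j k * u k" UNIV] sk by simp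
    also have "\<dots> = (\<Sum>k\<in>F. mmult a b i k * u k)"
      unfolding mmult_def by (simp add: infsum_cmult_left')
    finally show ?thesis .
  qed
  have split: "\<phi> u = \<phi> (restr F u) + \<phi> (restr (-F) u)" for F
  proof -
    have ru: "restr F u \<in> l2" "restr (-F) u \<in> l2" using l2_restr[OF u] by auto
    have "\<phi> u = mapply a (\<lambda>k. mapply b (restr F u) k + mapply b (restr (-F) u) k) i"
      unfolding \<phi>_def by (subst restr_split[of u F]) (simp add: mapply_add[OF b ru])
    also have "\<dots> = \<phi> (restr F u) + \<phi> (restr (-F) u)"
      unfolding \<phi>_def using ru by (simp add: mapply_add[OF a] bounded_mapply_l2[OF b])
    finally show ?thesis .
  qed
  from bounded_functional_has_sum[OF u bnd split fin] show ?thesis unfolding \<phi>_def .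
qed

lemma mapply_mmult:
  assumes "bounded_op a" "bounded_op b" "u \<in> l2"
  shows "mapply (mmult a b) u = mapply a (mapply b u)"
  using mmult_has_sum[OF assms] unfolding mapply_def by (intro ext infsumI) auto

lemma bounded_mmult:
  assumes a: "bounded_op a" and b: "bounded_op b"
  shows "bounded_op (mmult a b)"
proof (rule bounded_opI)
  fix x :: "'a \<Rightarrow> complex" and i assume x: "x \<in> l2"
  show "(\<lambda>j. mmult a b i j * x j) summable_on UNIV"
    using mmult_has_sum[OF a b x] by (auto simp: summable_on_def)
next
  fix x :: "'a \<Rightarrow> complex" assume x: "x \<in> l2"
  show "mapply (mmult a b) x \<in> l2" unfolding mapply_mmult[OF a b x]
    by (intro bounded_mapply_l2 a b x)
  have "l2norm (mapply (mmult a b) x) \<le> opnorm a * l2norm (mapply b x)"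
    unfolding mapply_mmult[OF a b x] by (intro opnorm_bound a bounded_mapply_l2 b x)
  also have "\<dots> \<le> opnorm a * (opnorm b * l2norm x)"
    by (intro mult_left_mono opnorm_bound b x opnorm_nonneg a)
  finally show "l2norm (mapply (mmult a b) x) \<le> (opnorm a * opnorm b) * l2norm x"
    by (simp add: mult.assoc)
qed

lemma opnorm_mmult:
  assumes a: "bounded_op a" and b: "bounded_op b"
  shows "opnorm (mmult a b) \<le> opnorm a * opnorm b"
proof (rule opnorm_le)
  fix x :: "'a \<Rightarrow> complex" assume x: "x \<in> l2"
  have "l2norm (mapply (mmult a b) x) \<le> opnorm a * l2norm (mapply b x)"
    unfolding mapply_mmult[OF a b x] by (intro opnorm_bound a bounded_mapply_l2 b x)
  also have "\<dots> \<le> opnorm a * (opnorm b * l2norm x)"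
    by (intro mult_left_mono opnorm_bound b x opnorm_nonneg a)
  finally show "l2norm (mapply (mmult a b) x) \<le> (opnorm a * opnorm b) * l2norm x"
    by (simp add: mult.assoc)
qed (intro mult_nonneg_nonneg opnorm_nonneg a b)

lemma mmult_madd_left:
  assumes "bounded_op a" "bounded_op b" "bounded_op c"
  shows "mmult (madd a b) c = madd (mmult a c) (mmult b c)"
proof (intro ext)
  fix i j
  have "(\<lambda>k. madd a b i k * c k j) = (\<lambda>k. a i k * c k j + b i k * c k j)"
    by (simp add: madd_def algebra_simps)
  then show "mmult (madd a b) c i j = madd (mmult a c) (mmult b c) i j"
    unfolding mmult_def madd_def
    using bounded_summable[OF assms(1) col_l2[OF assms(3)]] bounded_summable[OF assms(2) col_l2[OF assms(3)]]
    by (simp add: infsum_add)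
qed

lemma mmult_madd_right:
  assumes "bounded_op a" "bounded_op b" "bounded_op c"
  shows "mmult a (madd b c) = madd (mmult a b) (mmult a c)"
proof (intro ext)
  fix i j
  have "(\<lambda>k. a i k * madd b c k j) = (\<lambda>k. a i k * b k j + a i k * c k j)"
    by (simp add: madd_def algebra_simps)
  then show "mmult a (madd b c) i j = madd (mmult a b) (mmult a c) i j"
    unfolding mmult_def madd_def
    using bounded_summable[OF assms(1) col_l2[OF assms(2)]] bounded_summable[OF assms(1) col_l2[OF assms(3)]]
    by (simp add: infsum_add)
qed

lemma mmult_msmult_left: "mmult (msmult c a) b = msmult c (mmult a b)"
  unfolding mmult_def msmult_def by (simp add: mult.assoc infsum_cmult_right')

lemma mmult_msmult_right: "mmult a (msmult c b) = msmult c (mmult a b)"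
  unfolding mmult_def msmult_def by (simp add: mult.left_commute infsum_cmult_right')

lemma mmult_mzero_left[simp]: "mmult mzero b = mzero"
  unfolding mmult_def mzero_def by simp

lemma mmult_mzero_right[simp]: "mmult a mzero = mzero"
  unfolding mmult_def mzero_def by simp

lemma madj_shift: "madj shiftM = (\<lambda>i j. if j = Suc i then 1 else 0)"
  by (auto simp: madj_def shiftM_def intro!: ext)

lemma mpow_shift: "mpow shiftM n = (\<lambda>i j. if i = j + n then 1 else 0)"
proof (induction n)
  case 0 then show ?case by (auto simp: mid_def intro!: ext)
next
  case (Suc n)
  show ?case
  proof (intro ext)
    fix i j
    have "mpow shiftM (Suc n) i j = infsum (\<lambda>k. shiftM i k * (if k = j + n then 1 else 0)) UNIV"
      by (simp add: mmult_def Suc)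
    also have "\<dots> = shiftM i (j + n)" by (subst infsum_single_pt[where k="j+n"]) auto
    finally show "mpow shiftM (Suc n) i j = (if i = j + Suc n then 1 else 0)"
      by (simp add: shiftM_def)
  qed
qed

lemma mpow_adj: "mpow (madj shiftM) m = (\<lambda>i j. if j = i + m then 1 else 0)"
proof (induction m)
  case 0 then show ?case by (auto simp: mid_def intro!: ext)
next
  case (Suc m)
  show ?case
  proof (intro ext)
    fix i j
    have "mpow (madj shiftM) (Suc m) i j = infsum (\<lambda>k. (if k = Suc i then 1 else 0) * (if j = k + m then 1 else 0)) UNIV"
      by (simp only: mpow.simps Suc) (simp add: mmult_def madj_shift)
    also have "\<dots> = (if j = Suc i + m then 1 else 0)" by (subst infsum_single_pt[where k="Suc i"]) auto
    finally show "mpow (madj shiftM) (Suc m) i j = (if j = i + Suc m then 1 else 0)" by simp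
  qed
qed

lemma Tnm_eq: "Tnm n m = (\<lambda>i j. if n \<le> i \<and> m \<le> j \<and> i - n = j - m then 1 else 0)"
proof (intro ext)
  fix i j
  have "Tnm n m i j = infsum (\<lambda>k. (if i = k + n then 1 else 0) * (if j = k + m then 1 else 0)) UNIV"
    by (simp add: Tnm_def mmult_def mpow_shift mpow_adj)
  also have "\<dots> = (if i = (i - n) + n then 1 else 0) * (if j = (i - n) + m then 1 else 0)"
    by (subst infsum_single_pt[where k="i - n"]) auto
  also have "\<dots> = (if n \<le> i \<and> m \<le> j \<and> i - n = j - m then 1 else 0)" by auto
  finally show "Tnm n m i j = (if n \<le> i \<and> m \<le> j \<and> i - n = j - m then 1 else 0)" .
qed

lemma Tnm_10: "Tnm 1 0 = shiftM"
  by (auto simp: Tnm_eq shiftM_def intro!: ext)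

lemma Tnm_01: "Tnm 0 1 = madj shiftM"
  by (auto simp: Tnm_eq madj_shift intro!: ext)

lemma Tnm_arith: "((n::nat) \<le> i \<and> p \<le> i - n + m \<and> q \<le> j \<and> i - n + m - p = j - q) =
  (if m \<le> p then (n + p - m \<le> i \<and> q \<le> j \<and> i - (n+p-m) = j - q)
   else (n \<le> i \<and> q + m - p \<le> j \<and> i - n = j - (q + m - p)))"
  by (cases "m \<le> p") (simp_all, linarith+)

lemma Tnm_mult: "mmult (Tnm n m) (Tnm p q) = (if m \<le> p then Tnm (n + p - m) q else Tnm n (q + m - p))"
proof (intro ext)
  fix i j
  have "mmult (Tnm n m) (Tnm p q) i j = infsum (\<lambda>k. (if n \<le> i \<and> m \<le> k \<and> i - n = k - m then 1 else 0) * (if p \<le> k \<and> q \<le> j \<and> k - p = j - q then 1 else 0)) UNIV"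
    by (simp add: mmult_def Tnm_eq)
  also have "\<dots> = (if n \<le> i \<and> m \<le> (i - n + m) \<and> i - n = (i - n + m) - m then 1 else 0) * (if p \<le> (i - n + m) \<and> q \<le> j \<and> (i - n + m) - p = j - q then 1 else 0)"
    by (subst infsum_single_pt[where k="i - n + m"]) auto
  also have "\<dots> = (if n \<le> i \<and> p \<le> i - n + m \<and> q \<le> j \<and> i - n + m - p = j - q then 1 else 0)"
    by simp
  also have "\<dots> = (if m \<le> p then Tnm (n + p - m) q else Tnm n (q + m - p)) i j"
    unfolding Tnm_arith by (simp add: Tnm_eq)
  finally show "mmult (Tnm n m) (Tnm p q) i j = (if m \<le> p then Tnm (n + p - m) q else Tnm n (q + m - p)) i j" .
qed

text \<open>The identity (T*T = 1) and all T_{n,m} belong to the Toeplitz algebra.\<close>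
lemma mid_toeplitz: "mid \<in> Toeplitz"
proof -
  have "mmult (madj shiftM) shiftM = mid"
  proof (intro ext)
    fix i j
    have "mmult (madj shiftM) shiftM i j = infsum (\<lambda>k. (if k = Suc i then 1 else 0) * (if k = Suc j then 1 else 0)) UNIV"
      unfolding mmult_def madj_shift by (simp add: shiftM_def)
    also have "\<dots> = (if i = j then 1 else 0)" by (subst infsum_single_pt[where k="Suc i"]) auto
    finally show "mmult (madj shiftM) shiftM i j = mid i j" by (simp add: mid_def)
  qed
  moreover have "mmult (madj shiftM) shiftM \<in> Toeplitz"
    unfolding Toeplitz_def by (intro closed_alg.mult closed_alg.gen) auto
  ultimately show ?thesis by simp
qed

lemma mpow_toeplitz: "A \<in> Toeplitz \<Longrightarrow> mpow A n \<in> Toeplitz"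
  by (induction n) (auto simp: Toeplitz_def intro: closed_alg.mult mid_toeplitz[unfolded Toeplitz_def])

lemma Tnm_toeplitz: "Tnm n m \<in> Toeplitz"
proof -
  have "shiftM \<in> Toeplitz" "madj shiftM \<in> Toeplitz" unfolding Toeplitz_def by (auto intro: closed_alg.gen)
  then show ?thesis unfolding Tnm_def using mpow_toeplitz
    by (metis Toeplitz_def closed_alg.mult)
qed

lemma mapply_Tnm: "mapply (Tnm n m) x = (\<lambda>i. if n \<le> i then x (i - n + m) else 0)"
proof (intro ext)
  fix i
  show "mapply (Tnm n m) x i = (if n \<le> i then x (i - n + m) else 0)"
    unfolding mapply_def Tnm_eq by (subst infsum_single_pt[where k="i - n + m"]) auto
qed

lemma bounded_Tnm: "bounded_op (Tnm n m)"
proof (rule bounded_opI[where K=1])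
  fix x :: "nat \<Rightarrow> complex" and i assume "x \<in> l2"
  show "(\<lambda>j. Tnm n m i j * x j) summable_on UNIV"
    unfolding Tnm_eq by (rule summable_single_pt[where k="i - n + m"]) auto
next
  fix x :: "nat \<Rightarrow> complex" assume x: "x \<in> l2"
  define g where "g = (\<lambda>i. (cmod (x i))^2)"
  have sg: "g summable_on UNIV" using x by (simp add: l2_def g_def)
  have bij: "bij_betw (\<lambda>i. i - n + m) {n..} {m..}"
    by (rule bij_betw_byWitness[where f'="\<lambda>j. j - m + n"]) auto
  have e: "(\<lambda>i. (cmod (mapply (Tnm n m) x i))^2) = (\<lambda>i. if i \<in> {n..} then g (i - n + m) else 0)"
    by (auto simp: mapply_Tnm g_def intro!: ext)
  have s1: "g summable_on {m..}" using sg by (rule summable_on_subset_banach) auto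
  have s2: "(\<lambda>i. g (i - n + m)) summable_on {n..}"
    using summable_on_reindex_bij_betw[OF bij, of g] s1 by blast
  show "mapply (Tnm n m) x \<in> l2" unfolding l2_def mem_Collect_eq e summable_restr by (rule s2)
  have "infsum (\<lambda>i. (cmod (mapply (Tnm n m) x i))^2) UNIV = infsum g {m..}"
    unfolding e infsum_restr by (rule infsum_reindex_bij_betw[OF bij, of g])
  also have "\<dots> \<le> infsum g UNIV"
    by (rule infsum_mono_neutral[OF s1 sg]) (auto simp: g_def)
  finally have "(l2norm (mapply (Tnm n m) x))^2 \<le> (l2norm x)^2"
    unfolding l2norm_sq g_def .
  then show "l2norm (mapply (Tnm n m) x) \<le> 1 * l2norm x"
    using l2norm_nonneg[of x] power2_le_imp_le by auto
qed

lemma closed_span_bounded: assumes "a \<in> closed_span G" "\<forall>g\<in>G. bounded_op g" shows "bounded_op a"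
  using assms(1) by induction (auto simp: assms(2) bounded_mzero bounded_madd bounded_msmult)

lemma opnorm_tendsto_bound:
  assumes "(\<lambda>n. opnorm (D n)) \<longlonglongrightarrow> 0" "\<And>n. 0 \<le> opnorm (E n)" "\<And>n. opnorm (E n) \<le> c * opnorm (D n)"
  shows "(\<lambda>n. opnorm (E n)) \<longlonglongrightarrow> 0"
proof (rule Lim_null_comparison[where g="\<lambda>n. c * opnorm (D n)"])
  show "\<forall>\<^sub>F n in sequentially. norm (opnorm (E n)) \<le> c * opnorm (D n)"
    using assms(2,3) by (intro always_eventually) auto
  show "(\<lambda>n. c * opnorm (D n)) \<longlonglongrightarrow> 0" using tendsto_mult_right_zero[OF assms(1), of c] by simp
qed

lemma diff_left:
  assumes "bounded_op g" "bounded_op f" "bounded_op b"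
  shows "mmult g (madd f (msmult (-1) b)) = madd (mmult g f) (msmult (-1) (mmult g b))"
  by (simp add: mmult_madd_right[OF assms(1,2) bounded_msmult[OF assms(3)]] mmult_msmult_right)

lemma diff_right:
  assumes "bounded_op g" "bounded_op f" "bounded_op b"
  shows "mmult (madd f (msmult (-1) b)) g = madd (mmult f g) (msmult (-1) (mmult b g))"
  by (simp add: mmult_madd_left[OF assms(2) bounded_msmult[OF assms(3)] assms(1)] mmult_msmult_left)

lemma closed_span_mult_gen:
  assumes G: "\<forall>g\<in>G. bounded_op g" "\<forall>g\<in>G. \<forall>h\<in>G. mmult g h \<in> closed_span G"
  and g: "g \<in> G" and b: "b \<in> closed_span G"
  shows "mmult g b \<in> closed_span G"
  using b
proof induction
  case (gen a) then show ?case using G g by auto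
next
  case zero then show ?case by (simp add: closed_span.zero)
next
  case (add a b)
  have "bounded_op a" "bounded_op b" "bounded_op g"
    using closed_span_bounded[OF add(1) G(1)] closed_span_bounded[OF add(2) G(1)] G(1) g by auto
  then show ?case using add(3,4) by (simp add: mmult_madd_right closed_span.add)
next
  case (smult a c)
  then show ?case by (simp add: mmult_msmult_right closed_span.smult)
next
  case (lim f a)
  have bg: "bounded_op g" using G g by auto
  have bf: "bounded_op (f n)" for n using lim(1) closed_span_bounded G by blast
  show ?case
  proof (rule closed_span.lim[of "\<lambda>n. mmult g (f n)"])
    show "mmult g (f n) \<in> closed_span G" for n using lim.IH by blast
    show "bounded_op (mmult g a)" by (intro bounded_mmult bg lim.hyps(2))
    show "(\<lambda>n. opnorm (madd (mmult g (f n)) (msmult (- 1) (mmult g a)))) \<longlonglongrightarrow> 0"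
    proof (rule opnorm_tendsto_bound[OF lim.hyps(3)])
      fix n
      have e: "madd (mmult g (f n)) (msmult (- 1) (mmult g a)) = mmult g (madd (f n) (msmult (-1) a))"
        using diff_left[OF bg bf lim.hyps(2)] by simp
      have bd: "bounded_op (madd (f n) (msmult (-1) a))" by (intro bounded_madd bf bounded_msmult lim.hyps(2))
      show "0 \<le> opnorm (madd (mmult g (f n)) (msmult (- 1) (mmult g a)))"
        unfolding e by (intro opnorm_nonneg bounded_mmult bg bd)
      show "opnorm (madd (mmult g (f n)) (msmult (- 1) (mmult g a))) \<le> opnorm g * opnorm (madd (f n) (msmult (- 1) a))"
        unfolding e by (intro opnorm_mmult bg bd)
    qed
  qed
qed

lemma closed_span_mult:
  assumes G: "\<forall>g\<in>G. bounded_op g" "\<forall>g\<in>G. \<forall>h\<in>G. mmult g h \<in> closed_span G"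
  and a: "a \<in> closed_span G" and b: "b \<in> closed_span G"
  shows "mmult a b \<in> closed_span G"
  using a
proof induction
  case (gen g) then show ?case using closed_span_mult_gen[OF G _ b] by auto
next
  case zero then show ?case by (simp add: closed_span.zero)
next
  case (add a1 a2)
  have "bounded_op a1" "bounded_op a2" "bounded_op b"
    using closed_span_bounded[OF add(1) G(1)] closed_span_bounded[OF add(2) G(1)] closed_span_bounded[OF b G(1)] by auto
  then show ?case using add(3,4) by (simp add: mmult_madd_left closed_span.add)
next
  case (smult a c)
  then show ?case by (simp add: mmult_msmult_left closed_span.smult)
next
  case (lim f a)
  have bg: "bounded_op b" using G b closed_span_bounded by blast
  have bf: "bounded_op (f n)" for n using lim(1) closed_span_bounded G by blast
  show ?case
  proof (rule closed_span.lim[of "\<lambda>n. mmult (f n) b"])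
    show "mmult (f n) b \<in> closed_span G" for n using lim.IH by blast
    show "bounded_op (mmult a b)" by (intro bounded_mmult bg lim.hyps(2))
    show "(\<lambda>n. opnorm (madd (mmult (f n) b) (msmult (- 1) (mmult a b)))) \<longlonglongrightarrow> 0"
    proof (rule opnorm_tendsto_bound[OF lim.hyps(3), where c="opnorm b"])
      fix n
      have e: "madd (mmult (f n) b) (msmult (- 1) (mmult a b)) = mmult (madd (f n) (msmult (-1) a)) b"
        using diff_right[OF bg bf lim.hyps(2)] by simp
      have bd: "bounded_op (madd (f n) (msmult (-1) a))" by (intro bounded_madd bf bounded_msmult lim.hyps(2))
      show "0 \<le> opnorm (madd (mmult (f n) b) (msmult (- 1) (mmult a b)))"
        unfolding e by (intro opnorm_nonneg bounded_mmult bg bd)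
      show "opnorm (madd (mmult (f n) b) (msmult (- 1) (mmult a b))) \<le> opnorm b * opnorm (madd (f n) (msmult (- 1) a))"
        unfolding e using opnorm_mmult[OF bd bg] by (simp add: mult.commute)
    qed
  qed
qed

definition Tnm_set :: "nat opm set" where "Tnm_set = {Tnm n m | n m. True}"

lemma Tnm_set_bounded: "\<forall>g\<in>Tnm_set. bounded_op g"
  by (auto simp: Tnm_set_def bounded_Tnm)

lemma Tnm_set_mult: "\<forall>g\<in>Tnm_set. \<forall>h\<in>Tnm_set. mmult g h \<in> closed_span Tnm_set"
  unfolding Tnm_set_def by (auto simp: Tnm_mult intro!: closed_span.gen) blast+

lemma Toeplitz_sub_closed_span: "x \<in> Toeplitz \<Longrightarrow> x \<in> closed_span Tnm_set"
  unfolding Toeplitz_def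
proof (induction rule: closed_alg.induct)
  case (gen a)
  have "Tnm 1 0 \<in> Tnm_set" "Tnm 0 1 \<in> Tnm_set" unfolding Tnm_set_def by blast+
  then have "shiftM \<in> Tnm_set" "madj shiftM \<in> Tnm_set" using Tnm_10 Tnm_01 by simp_all
  then show ?case using gen by (auto intro: closed_span.gen)
next
  case (add a b) then show ?case by (intro closed_span.add add.IH)
next
  case (smult a c) then show ?case by (intro closed_span.smult smult.IH)
next
  case (mult a b) then show ?case using closed_span_mult[OF Tnm_set_bounded Tnm_set_mult mult.IH] by blast
next
  case (lim f a) show ?case by (rule closed_span.lim[of f, OF lim.IH lim.hyps(2,3)])
qed

lemma Toeplitz_bounded: "x \<in> Toeplitz \<Longrightarrow> bounded_op x"
  using Toeplitz_sub_closed_span closed_span_bounded Tnm_set_bounded by blast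

section \<open>Amplifications\<close>

text \<open>Given a bijection \<rho> : A \<rightarrow> B \<times> D, the amplification ampl
  \<rho> X is X \<otimes> 1 on l2(B) \<otimes> l2(D), transported to l2(A).\<close>
definition ampl :: "('a \<Rightarrow> 'b \<times> 'd) \<Rightarrow> 'b opm \<Rightarrow> 'a opm" where
  "ampl \<rho> X = (\<lambda>\<alpha> \<beta>. if snd (\<rho> \<alpha>) = snd (\<rho> \<beta>) then X (fst (\<rho> \<alpha>)) (fst (\<rho> \<beta>)) else 0)"

lemma ampl_madd: "ampl \<rho> (madd X Y) = madd (ampl \<rho> X) (ampl \<rho> Y)"
  by (auto simp: ampl_def madd_def intro!: ext)

lemma ampl_msmult: "ampl \<rho> (msmult c X) = msmult c (ampl \<rho> X)"
  by (auto simp: ampl_def msmult_def intro!: ext)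

lemma ampl_madj: "ampl \<rho> (madj X) = madj (ampl \<rho> X)"
  by (auto simp: ampl_def madj_def intro!: ext)

lemma ampl_mzero: "ampl \<rho> mzero = mzero"
  by (auto simp: ampl_def mzero_def intro!: ext)

lemma ampl_mid: assumes "bij \<rho>" shows "ampl \<rho> mid = mid"
proof (intro ext)
  fix \<alpha> \<beta>
  have "(snd (\<rho> \<alpha>) = snd (\<rho> \<beta>) \<and> fst (\<rho> \<alpha>) = fst (\<rho> \<beta>)) = (\<alpha> = \<beta>)"
    using assms by (metis bij_is_inj inj_eq prod_eq_iff)
  then show "ampl \<rho> mid \<alpha> \<beta> = mid \<alpha> \<beta>" by (auto simp: ampl_def mid_def)
qed

text \<open>Each fiber {\<alpha>. snd (\<rho> \<alpha>) = d} is a copy of B, so sums over fibers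
  become sums over B.\<close>
lemma fiber_bij:
  assumes "bij \<rho>"
  shows "bij_betw (\<lambda>b. inv \<rho> (b, d)) UNIV {\<alpha>. snd (\<rho> \<alpha>) = d}"
proof (rule bij_betw_byWitness[where f'="\<lambda>\<alpha>. fst (\<rho> \<alpha>)"])
  have r: "\<rho> (inv \<rho> y) = y" for y using assms by (simp add: surj_f_inv_f bij_is_surj)
  have l: "inv \<rho> (\<rho> x) = x" for x using assms by (simp add: bij_is_inj)
  show "\<forall>a\<in>UNIV. fst (\<rho> (inv \<rho> (a, d))) = a" using r by simp
  show "\<forall>a'\<in>{\<alpha>. snd (\<rho> \<alpha>) = d}. inv \<rho> (fst (\<rho> a'), d) = a'"
    using l by (metis (mono_tags, lifting) mem_Collect_eq prod.collapse)
  show "(\<lambda>b. inv \<rho> (b, d)) ` UNIV \<subseteq> {\<alpha>. snd (\<rho> \<alpha>) = d}" using r by auto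
  show "(\<lambda>\<alpha>. fst (\<rho> \<alpha>)) ` {\<alpha>. snd (\<rho> \<alpha>) = d} \<subseteq> UNIV" by simp
qed

lemma fst_apply_inv: "bij \<rho> \<Longrightarrow> fst (\<rho> (inv \<rho> (b, d))) = b"
  by (simp add: surj_f_inv_f bij_is_surj)

lemma fiber_infsum:
  fixes k :: "'a \<Rightarrow> 'c::{comm_monoid_add, t2_space}"
  assumes "bij \<rho>"
  shows "infsum (\<lambda>\<beta>. if snd (\<rho> \<beta>) = d then k \<beta> else 0) UNIV = infsum (\<lambda>b. k (inv \<rho> (b, d))) UNIV"
proof -
  have "infsum (\<lambda>\<beta>. if snd (\<rho> \<beta>) = d then k \<beta> else 0) UNIV = infsum (\<lambda>\<beta>. if \<beta> \<in> {\<alpha>. snd (\<rho> \<alpha>) = d} then k \<beta> else 0) UNIV"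
    by simp
  also have "\<dots> = infsum k {\<alpha>. snd (\<rho> \<alpha>) = d}" by (rule infsum_restr)
  also have "\<dots> = infsum (\<lambda>b. k (inv \<rho> (b, d))) UNIV"
    by (rule infsum_reindex_bij_betw[OF fiber_bij[OF assms], symmetric])
  finally show ?thesis .
qed

lemma fiber_summable:
  fixes k :: "'a \<Rightarrow> 'c::{comm_monoid_add, t2_space}"
  assumes "bij \<rho>"
  shows "(\<lambda>\<beta>. if snd (\<rho> \<beta>) = d then k \<beta> else 0) summable_on UNIV \<longleftrightarrow> (\<lambda>b. k (inv \<rho> (b, d))) summable_on UNIV"
proof -
  have "(\<lambda>\<beta>. if snd (\<rho> \<beta>) = d then k \<beta> else 0) summable_on UNIV \<longleftrightarrow> (\<lambda>\<beta>. if \<beta> \<in> {\<alpha>. snd (\<rho> \<alpha>) = d} then k \<beta> else 0) summable_on UNIV"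
    by simp
  also have "\<dots> \<longleftrightarrow> k summable_on {\<alpha>. snd (\<rho> \<alpha>) = d}" by (rule summable_restr)
  also have "\<dots> \<longleftrightarrow> (\<lambda>b. k (inv \<rho> (b, d))) summable_on UNIV"
    by (rule summable_on_reindex_bij_betw[OF fiber_bij[OF assms], symmetric])
  finally show ?thesis .
qed

text \<open>Amplification is multiplicative: the product only couples indices within one fiber.\<close>
lemma ampl_mmult:
  assumes "bij \<rho>"
  shows "mmult (ampl \<rho> X) (ampl \<rho> Y) = ampl \<rho> (mmult X Y)"
proof (intro ext)
  fix \<alpha> \<gamma>
  show "mmult (ampl \<rho> X) (ampl \<rho> Y) \<alpha> \<gamma> = ampl \<rho> (mmult X Y) \<alpha> \<gamma>"
  proof (cases "snd (\<rho> \<alpha>) = snd (\<rho> \<gamma>)")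
    case False
    have "mmult (ampl \<rho> X) (ampl \<rho> Y) \<alpha> \<gamma> = 0"
      unfolding mmult_def ampl_def using False by (intro infsum_0) auto
    then show ?thesis using False by (simp add: ampl_def)
  next
    case True
    define d where "d = snd (\<rho> \<alpha>)"
    have "mmult (ampl \<rho> X) (ampl \<rho> Y) \<alpha> \<gamma> = infsum (\<lambda>\<beta>. if snd (\<rho> \<beta>) = d then X (fst (\<rho> \<alpha>)) (fst (\<rho> \<beta>)) * Y (fst (\<rho> \<beta>)) (fst (\<rho> \<gamma>)) else 0) UNIV"
      unfolding mmult_def ampl_def using True d_def by (intro infsum_cong) auto
    also have "\<dots> = infsum (\<lambda>b. X (fst (\<rho> \<alpha>)) b * Y b (fst (\<rho> \<gamma>))) UNIV"
      by (subst fiber_infsum[OF assms]) (simp add: fst_apply_inv[OF assms])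
    finally show ?thesis using True by (simp add: ampl_def mmult_def)
  qed
qed

definition slice :: "('a \<Rightarrow> 'b \<times> 'd) \<Rightarrow> ('a \<Rightarrow> complex) \<Rightarrow> 'd \<Rightarrow> ('b \<Rightarrow> complex)" where
  "slice \<rho> w d = (\<lambda>b. w (inv \<rho> (b, d)))"

lemma ampl_row:
  assumes "bij \<rho>"
  shows "(\<lambda>\<beta>. ampl \<rho> X \<alpha> \<beta> * w \<beta>) = (\<lambda>\<beta>. if snd (\<rho> \<beta>) = snd (\<rho> \<alpha>) then X (fst (\<rho> \<alpha>)) (fst (\<rho> \<beta>)) * w \<beta> else 0)"
  by (auto simp: ampl_def intro!: ext)

lemma mapply_ampl:
  assumes "bij \<rho>"
  shows "mapply (ampl \<rho> X) w \<alpha> = mapply X (slice \<rho> w (snd (\<rho> \<alpha>))) (fst (\<rho> \<alpha>))"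
  unfolding mapply_def ampl_row[OF assms] fiber_infsum[OF assms] slice_def
  by (simp add: fst_apply_inv[OF assms])

lemma summable_ampl:
  assumes "bij \<rho>"
  shows "(\<lambda>\<beta>. ampl \<rho> X \<alpha> \<beta> * w \<beta>) summable_on UNIV \<longleftrightarrow> (\<lambda>b. X (fst (\<rho> \<alpha>)) b * slice \<rho> w (snd (\<rho> \<alpha>)) b) summable_on UNIV"
  unfolding ampl_row[OF assms] fiber_summable[OF assms] slice_def
  by (simp add: fst_apply_inv[OF assms])

lemma slice_l2:
  assumes "bij \<rho>" "w \<in> l2"
  shows "slice \<rho> w d \<in> l2"
proof -
  have "(\<lambda>\<beta>. if snd (\<rho> \<beta>) = d then (cmod (w \<beta>))^2 else 0) summable_on UNIV"
    using assms(2) unfolding l2_def mem_Collect_eq by (rule summable_on_comparison_test) auto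
  then show ?thesis unfolding l2_def mem_Collect_eq fiber_summable[OF assms(1)] slice_def .
qed

lemma slice_norm_sq:
  assumes "bij \<rho>"
  shows "(l2norm (slice \<rho> w d))^2 = infsum (\<lambda>\<beta>. if snd (\<rho> \<beta>) = d then (cmod (w \<beta>))^2 else 0) UNIV"
  unfolding l2norm_sq fiber_infsum[OF assms] slice_def ..

lemma slice_sum_le:
  assumes "bij \<rho>" "w \<in> l2" "finite D"
  shows "(\<Sum>d\<in>D. (l2norm (slice \<rho> w d))^2) \<le> (l2norm w)^2"
proof -
  define g where "g = (\<lambda>\<beta>. (cmod (w \<beta>))^2)"
  have sg: "g summable_on UNIV" using assms(2) by (simp add: l2_def g_def)
  have sk: "(\<lambda>\<beta>. if snd (\<rho> \<beta>) = d then g \<beta> else 0) summable_on UNIV" for d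
    using sg by (rule summable_on_comparison_test) (auto simp: g_def)
  have "(\<Sum>d\<in>D. (l2norm (slice \<rho> w d))^2) = (\<Sum>d\<in>D. infsum (\<lambda>\<beta>. if snd (\<rho> \<beta>) = d then g \<beta> else 0) UNIV)"
    unfolding slice_norm_sq[OF assms(1)] g_def ..
  also have "\<dots> = infsum (\<lambda>\<beta>. \<Sum>d\<in>D. if snd (\<rho> \<beta>) = d then g \<beta> else 0) UNIV"
    using infsum_finite_sum[OF assms(3), of "\<lambda>d \<beta>. if snd (\<rho> \<beta>) = d then g \<beta> else 0" UNIV] sk by simp
  also have "\<dots> \<le> infsum g UNIV"
  proof (rule infsum_mono)
    show "(\<lambda>\<beta>. \<Sum>d\<in>D. if snd (\<rho> \<beta>) = d then g \<beta> else 0) summable_on UNIV"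
      using infsum_finite_sum[OF assms(3), of "\<lambda>d \<beta>. if snd (\<rho> \<beta>) = d then g \<beta> else 0" UNIV] sk by simp
    show "g summable_on UNIV" by (rule sg)
    fix \<beta>
    have "(\<Sum>d\<in>D. if snd (\<rho> \<beta>) = d then g \<beta> else 0) = (if snd (\<rho> \<beta>) \<in> D then g \<beta> else 0)"
      using assms(3) by (simp add: sum.delta)
    then show "(\<Sum>d\<in>D. if snd (\<rho> \<beta>) = d then g \<beta> else 0) \<le> g \<beta>" by (simp add: g_def)
  qed
  finally show ?thesis unfolding l2norm_sq g_def .
qed

lemma ampl_slice_sum_le:
  assumes r: "bij \<rho>" and X: "bounded_op X" and w: "w \<in> l2" and P: "finite P"
  shows "(\<Sum>\<alpha>\<in>{\<alpha>. \<alpha> \<in> P \<and> snd (\<rho> \<alpha>) = d}. (cmod (mapply (ampl \<rho> X) w \<alpha>))^2)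
           \<le> (opnorm X)^2 * (l2norm (slice \<rho> w d))^2"
proof -
  define Pd where "Pd = {\<alpha>. \<alpha> \<in> P \<and> snd (\<rho> \<alpha>) = d}"
  have inj: "inj_on (\<lambda>\<alpha>. fst (\<rho> \<alpha>)) Pd"
  proof (rule inj_onI)
    fix x y assume "x \<in> Pd" "y \<in> Pd" "fst (\<rho> x) = fst (\<rho> y)"
    then have "\<rho> x = \<rho> y" unfolding Pd_def by (simp add: prod_eq_iff)
    then show "x = y" using r by (simp add: bij_is_inj inj_eq)
  qed
  have "(\<Sum>\<alpha>\<in>Pd. (cmod (mapply (ampl \<rho> X) w \<alpha>))^2)
          = (\<Sum>\<alpha>\<in>Pd. (cmod (mapply X (slice \<rho> w d) (fst (\<rho> \<alpha>))))^2)"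
    unfolding mapply_ampl[OF r] Pd_def by (intro sum.cong) auto
  also have "\<dots> = (\<Sum>b\<in>(\<lambda>\<alpha>. fst (\<rho> \<alpha>)) ` Pd. (cmod (mapply X (slice \<rho> w d) b))^2)"
    by (rule sum.reindex[OF inj, symmetric, unfolded comp_def])
  also have "\<dots> \<le> (l2norm (mapply X (slice \<rho> w d)))^2"
    using P by (intro finite_sum_le_l2norm_sq bounded_mapply_l2 X slice_l2 r w) (simp add: Pd_def)
  also have "\<dots> \<le> (opnorm X * l2norm (slice \<rho> w d))^2"
    by (intro power_mono opnorm_bound X slice_l2 r w l2norm_nonneg)
  finally show ?thesis unfolding Pd_def by (simp add: power_mult_distrib)
qed

text \<open>Summing the fiber estimates: amplification maps l2 into l2 without increasing norms.\<close>
lemma ampl_norm_sq_le: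
  assumes r: "bij \<rho>" and X: "bounded_op X" and w: "w \<in> l2"
  shows "mapply (ampl \<rho> X) w \<in> l2 \<and> (l2norm (mapply (ampl \<rho> X) w))^2 \<le> (opnorm X)^2 * (l2norm w)^2"
proof -
  define h where "h = (\<lambda>\<alpha>. (cmod (mapply (ampl \<rho> X) w \<alpha>))^2)"
  have fsum: "sum h P \<le> (opnorm X)^2 * (l2norm w)^2" if P: "finite P" for P
  proof -
    define D where "D = (\<lambda>\<alpha>. snd (\<rho> \<alpha>)) ` P"
    have fD: "finite D" using P by (simp add: D_def)
    have "sum h P = (\<Sum>d\<in>D. sum h {\<alpha>. \<alpha> \<in> P \<and> snd (\<rho> \<alpha>) = d})"
      unfolding D_def by (rule sum.image_gen[OF P])
    also have "\<dots> \<le> (\<Sum>d\<in>D. (opnorm X)^2 * (l2norm (slice \<rho> w d))^2)"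
      unfolding h_def by (intro sum_mono ampl_slice_sum_le r X w P)
    also have "\<dots> = (opnorm X)^2 * (\<Sum>d\<in>D. (l2norm (slice \<rho> w d))^2)" by (simp add: sum_distrib_left)
    also have "\<dots> \<le> (opnorm X)^2 * (l2norm w)^2"
      by (intro mult_left_mono slice_sum_le r w fD) simp
    finally show ?thesis .
  qed
  have sh: "h summable_on UNIV"
  proof (rule nonneg_bdd_above_summable_on)
    show "bdd_above (sum h ` {F. F \<subseteq> UNIV \<and> finite F})"
      using fsum by (intro bdd_aboveI[where M="(opnorm X)^2 * (l2norm w)^2"]) auto
  qed (simp add: h_def)
  have "infsum h UNIV \<le> (opnorm X)^2 * (l2norm w)^2"
    by (rule infsum_le_finite_sums[OF sh fsum])
  then show ?thesis using sh unfolding l2_def l2norm_sq h_def by simp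
qed

lemma ampl_bounded:
  assumes r: "bij \<rho>" and X: "bounded_op X"
  shows "bounded_op (ampl \<rho> X)" "opnorm (ampl \<rho> X) \<le> opnorm X"
proof -
  have nb: "l2norm (mapply (ampl \<rho> X) w) \<le> opnorm X * l2norm w" if w: "w \<in> l2" for w
  proof -
    have "(l2norm (mapply (ampl \<rho> X) w))^2 \<le> (opnorm X * l2norm w)^2"
      using ampl_norm_sq_le[OF r X w] by (simp add: power_mult_distrib)
    then show ?thesis
      by (rule power2_le_imp_le) (intro mult_nonneg_nonneg opnorm_nonneg X l2norm_nonneg)
  qed
  show "bounded_op (ampl \<rho> X)"
  proof (rule bounded_opI)
    fix x :: "'a \<Rightarrow> complex" and i assume x: "x \<in> l2"
    show "(\<lambda>j. ampl \<rho> X i j * x j) summable_on UNIV"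
      unfolding summable_ampl[OF r] by (intro bounded_summable X slice_l2 r x)
    show "mapply (ampl \<rho> X) x \<in> l2" using ampl_norm_sq_le[OF r X x] by simp
    show "l2norm (mapply (ampl \<rho> X) x) \<le> opnorm X * l2norm x" by (rule nb[OF x])
  qed
  show "opnorm (ampl \<rho> X) \<le> opnorm X"
    by (rule opnorm_le[OF nb opnorm_nonneg[OF X]])
qed

text \<open>Amplification is norm-continuous, so it maps closed spans into closed spans.\<close>
lemma ampl_lim:
  assumes r: "bij \<rho>" and f: "\<And>n. bounded_op (f n)" and a: "bounded_op a"
    and t: "(\<lambda>n. opnorm (madd (f n) (msmult (-1) a))) \<longlonglongrightarrow> 0"
  shows "(\<lambda>n. opnorm (madd (ampl \<rho> (f n)) (msmult (-1) (ampl \<rho> a)))) \<longlonglongrightarrow> 0"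
proof (rule opnorm_tendsto_bound[OF t, where c=1])
  fix n
  have e: "madd (ampl \<rho> (f n)) (msmult (-1) (ampl \<rho> a)) = ampl \<rho> (madd (f n) (msmult (-1) a))"
    by (simp add: ampl_madd ampl_msmult)
  have bd: "bounded_op (madd (f n) (msmult (-1) a))" by (intro bounded_madd f bounded_msmult a)
  show "0 \<le> opnorm (madd (ampl \<rho> (f n)) (msmult (- 1) (ampl \<rho> a)))"
    unfolding e by (intro opnorm_nonneg ampl_bounded(1) r bd)
  show "opnorm (madd (ampl \<rho> (f n)) (msmult (- 1) (ampl \<rho> a))) \<le> 1 * opnorm (madd (f n) (msmult (- 1) a))"
    unfolding e using ampl_bounded(2)[OF r bd] by simp
qed

lemma ampl_closed_span:
  assumes r: "bij \<rho>" and G: "\<forall>g\<in>G. bounded_op g" and img: "\<And>g. g \<in> G \<Longrightarrow> ampl \<rho> g \<in> closed_span H"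
    and x: "x \<in> closed_span G"
  shows "ampl \<rho> x \<in> closed_span H"
  using x
proof induction
  case (gen a) then show ?case by (rule img)
next
  case zero then show ?case by (simp add: ampl_mzero closed_span.zero)
next
  case (add a b) then show ?case by (simp add: ampl_madd closed_span.add)
next
  case (smult a c) then show ?case by (simp add: ampl_msmult closed_span.smult)
next
  case (lim f a)
  show ?case
  proof (rule closed_span.lim[of "\<lambda>n. ampl \<rho> (f n)"])
    show "ampl \<rho> (f n) \<in> closed_span H" for n using lim.IH by blast
    show "bounded_op (ampl \<rho> a)" by (intro ampl_bounded(1) r lim.hyps(2))
    show "(\<lambda>n. opnorm (madd (ampl \<rho> (f n)) (msmult (- 1) (ampl \<rho> a)))) \<longlonglongrightarrow> 0"
      by (rule ampl_lim[OF r _ lim.hyps(2,3)]) (use lim.hyps(1) closed_span_bounded G in blast)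
  qed
qed

lemma ampl_hom:
  assumes r: "bij \<rho>" and maps: "\<And>a. a \<in> A \<Longrightarrow> ampl \<rho> a \<in> B"
  shows "unital_star_hom A B (ampl \<rho>)"
  unfolding unital_star_hom_def
  by (simp add: maps ampl_madd ampl_msmult ampl_mmult[OF r] ampl_madj ampl_mid[OF r])

text \<open>a \<otimes> 1 and 1 \<otimes> b are amplifications, and a \<otimes> b is their
  product.\<close>
lemma mtensor_mid_right_ampl: "mtensor a (mid :: 'j opm) = ampl (id :: 'i \<times> 'j \<Rightarrow> 'i \<times> 'j) a"
  by (auto simp: mtensor_def ampl_def mid_def intro!: ext)

lemma mtensor_mid_left_ampl: "mtensor (mid :: 'i opm) b = ampl (\<lambda>(i::'i, j::'j). (j, i)) b"
  by (auto simp: mtensor_def ampl_def mid_def intro!: ext)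

lemma mtensor_factor: "mtensor a b = mmult (mtensor a mid) (mtensor mid b)"
proof (intro ext)
  fix \<alpha> \<beta> :: "'a \<times> 'b"
  obtain i j where a: "\<alpha> = (i, j)" by (cases \<alpha>)
  obtain k l where b: "\<beta> = (k, l)" by (cases \<beta>)
  have "mmult (mtensor a mid) (mtensor mid b) \<alpha> \<beta> = mtensor a mid \<alpha> (k, j) * mtensor mid b (k, j) \<beta>"
    unfolding mmult_def by (rule infsum_single_pt) (auto simp: a b mtensor_def mid_def split: if_splits)
  then show "mtensor a b \<alpha> \<beta> = mmult (mtensor a mid) (mtensor mid b) \<alpha> \<beta>"
    by (simp add: a b mtensor_def mid_def)
qed

lemma bij_swap: "bij (\<lambda>(i::'i, j::'j). (j, i))"
  by (rule bij_betw_byWitness[where f'="\<lambda>(j, i). (i, j)"]) auto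

lemma bounded_mtensor:
  assumes "bounded_op a" "bounded_op b"
  shows "bounded_op (mtensor a b)"
  unfolding mtensor_factor[of a b] mtensor_mid_right_ampl mtensor_mid_left_ampl
  by (intro bounded_mmult ampl_bounded(1) assms bij_id bij_swap)

lemma Toeplitz_tensors_bounded: "\<forall>g\<in>{mtensor a b |a b. a \<in> Toeplitz \<and> b \<in> Toeplitz}. bounded_op g"
  using bounded_mtensor Toeplitz_bounded by blast

text \<open>The coordinates \<sigma>(i,j) = (min i j, i - j) on N \<times> N, in which T
  \<otimes> T becomes T \<otimes> 1.\<close>
definition diag_coords :: "nat \<times> nat \<Rightarrow> nat \<times> int" where
  "diag_coords p = (min (fst p) (snd p), int (fst p) - int (snd p))"

definition diag_coords_inv :: "nat \<times> int \<Rightarrow> nat \<times> nat" where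
  "diag_coords_inv q = (if snd q \<ge> 0 then (fst q + nat (snd q), fst q) else (fst q, fst q + nat (- snd q)))"

lemma diag_coords_inv_left[simp]: "diag_coords_inv (diag_coords p) = p"
  by (cases p) (auto simp: diag_coords_def diag_coords_inv_def min_def)

lemma diag_coords_inv_right[simp]: "diag_coords (diag_coords_inv q) = q"
  by (cases q) (auto simp: diag_coords_def diag_coords_inv_def min_def)

lemma bij_diag_coords: "bij diag_coords"
  by (rule bij_betw_byWitness[where f'=diag_coords_inv]) auto

definition comult :: "nat opm \<Rightarrow> (nat \<times> nat) opm" where "comult = ampl diag_coords"

text \<open>\<Delta>(T_{n,m}) = T_{n,m} \<otimes> T_{n,m}: in the coordinates \<sigma>, the right-hand side acts as
  T_{n,m} on the first coordinate min i j and preserves the offset i - j.\<close>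
lemma tensor_arith:
  "(int i - int j = int k - int l \<and> (n::nat) \<le> min i j \<and> (m::nat) \<le> min k l \<and> min i j - n = min k l - m) =
   ((n \<le> i \<and> m \<le> k \<and> i - n = k - m) \<and> (n \<le> j \<and> m \<le> l \<and> j - n = l - m))"
  by (cases "i \<le> j"; cases "k \<le> l") (simp_all add: min_def, linarith+)

lemma comult_Tnm: "comult (Tnm n m) = mtensor (Tnm n m) (Tnm n m)"
proof (intro ext)
  fix \<alpha> \<beta> :: "nat \<times> nat"
  obtain i j where a: "\<alpha> = (i, j)" by (cases \<alpha>)
  obtain k l where b: "\<beta> = (k, l)" by (cases \<beta>)
  have "comult (Tnm n m) \<alpha> \<beta> = (if int i - int j = int k - int l \<and> n \<le> min i j \<and> m \<le> min k l \<and> min i j - n = min k l - m then 1 else 0)"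
    by (auto simp: comult_def ampl_def diag_coords_def Tnm_eq a b)
  also have "\<dots> = (if (n \<le> i \<and> m \<le> k \<and> i - n = k - m) \<and> (n \<le> j \<and> m \<le> l \<and> j - n = l - m) then 1 else 0)"
    unfolding tensor_arith ..
  also have "\<dots> = mtensor (Tnm n m) (Tnm n m) \<alpha> \<beta>"
    by (simp add: mtensor_def Tnm_eq a b)
  finally show "comult (Tnm n m) \<alpha> \<beta> = mtensor (Tnm n m) (Tnm n m) \<alpha> \<beta>" .
qed

lemma comult_shift: "comult shiftM = mtensor shiftM shiftM"
  using comult_Tnm[of 1 0] unfolding Tnm_10 .

text \<open>\<Delta> maps the Toeplitz algebra into its minimal tensor square: it sends the
  spanning operators T_{n,m} to elementary tensors.\<close>
lemma comult_maps: "a \<in> Toeplitz \<Longrightarrow> comult a \<in> ctensor Toeplitz Toeplitz"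
  unfolding comult_def ctensor_def
proof (rule ampl_closed_span[OF bij_diag_coords Tnm_set_bounded _ Toeplitz_sub_closed_span])
  fix g assume "g \<in> Tnm_set"
  then obtain n m where g: "g = Tnm n m" unfolding Tnm_set_def by blast
  show "ampl diag_coords g \<in> closed_span {mtensor a b |a b. a \<in> Toeplitz \<and> b \<in> Toeplitz}"
    unfolding g comult_def[symmetric] comult_Tnm by (intro closed_span.gen) (blast intro: Tnm_toeplitz)
qed

lemma comult_hom: "unital_star_hom Toeplitz (ctensor Toeplitz Toeplitz) comult"
  unfolding comult_def by (rule ampl_hom[OF bij_diag_coords]) (rule comult_maps[unfolded comult_def])

section \<open>Uniqueness\<close>

definition matrix_unit :: "nat \<Rightarrow> nat \<Rightarrow> nat opm" where
  "matrix_unit i j = (\<lambda>p q. if p = i \<and> q = j then 1 else 0)"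

lemma matrix_unit_eq: "matrix_unit i j = madd (Tnm i j) (msmult (-1) (Tnm (Suc i) (Suc j)))"
proof (intro ext)
  fix p q
  show "matrix_unit i j p q = madd (Tnm i j) (msmult (-1) (Tnm (Suc i) (Suc j))) p q"
  proof (cases "p = i")
    case True then show ?thesis by (auto simp: matrix_unit_def madd_def msmult_def Tnm_eq)
  next
    case False
    have "(i \<le> p \<and> j \<le> q \<and> p - i = q - j) = (Suc i \<le> p \<and> Suc j \<le> q \<and> p - Suc i = q - Suc j)"
      using False by auto
    then show ?thesis using False by (simp add: matrix_unit_def madd_def msmult_def Tnm_eq)
  qed
qed

lemma matrix_unit_toeplitz: "matrix_unit i j \<in> Toeplitz"
  unfolding matrix_unit_eq Toeplitz_def
  by (intro closed_alg.add closed_alg.smult Tnm_toeplitz[unfolded Toeplitz_def])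

lemma matrix_unit_left: "mmult (matrix_unit i i) x = (\<lambda>p q. if p = i then x i q else 0)"
proof (intro ext)
  fix p q
  show "mmult (matrix_unit i i) x p q = (if p = i then x i q else 0)"
    unfolding mmult_def matrix_unit_def by (subst infsum_single_pt[where k=i]) auto
qed

lemma matrix_unit_sandwich: "mmult (mmult (matrix_unit i i) x) (matrix_unit j j) = msmult (x i j) (matrix_unit i j)"
proof (intro ext)
  fix p q
  show "mmult (mmult (matrix_unit i i) x) (matrix_unit j j) p q = msmult (x i j) (matrix_unit i j) p q"
  proof -
    have "mmult (mmult (matrix_unit i i) x) (matrix_unit j j) p q = infsum (\<lambda>k. (if p = i then x i k else 0) * (if k = j \<and> q = j then 1 else 0)) UNIV"
      unfolding matrix_unit_left by (simp add: mmult_def matrix_unit_def)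
    also have "\<dots> = (if p = i then x i j else 0) * (if j = j \<and> q = j then 1 else 0)"
      by (rule infsum_single_pt) auto
    finally show ?thesis by (simp add: msmult_def matrix_unit_def)
  qed
qed

lemma diag_left: "mmult (\<lambda>\<alpha> \<beta>. if \<alpha> = \<beta> \<and> P \<alpha> then 1 else 0) Y = (\<lambda>\<alpha> \<gamma>. if P \<alpha> then Y \<alpha> \<gamma> else 0)"
proof (intro ext)
  fix \<alpha> \<gamma>
  show "mmult (\<lambda>\<alpha> \<beta>. if \<alpha> = \<beta> \<and> P \<alpha> then 1 else 0) Y \<alpha> \<gamma> = (if P \<alpha> then Y \<alpha> \<gamma> else 0)"
    unfolding mmult_def by (subst infsum_single_pt[where k=\<alpha>]) auto
qed

lemma diag_right: "mmult Y (\<lambda>\<alpha> \<beta>. if \<alpha> = \<beta> \<and> P \<alpha> then 1 else 0) = (\<lambda>\<alpha> \<gamma>. if P \<gamma> then Y \<alpha> \<gamma> else 0)"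
proof (intro ext)
  fix \<alpha> \<gamma>
  show "mmult Y (\<lambda>\<alpha> \<beta>. if \<alpha> = \<beta> \<and> P \<alpha> then 1 else 0) \<alpha> \<gamma> = (if P \<gamma> then Y \<alpha> \<gamma> else 0)"
    unfolding mmult_def by (subst infsum_single_pt[where k=\<gamma>]) auto
qed

lemma diag_coords_eq_iff: "diag_coords \<alpha> = diag_coords \<beta> \<longleftrightarrow> \<alpha> = \<beta>"
  by (metis diag_coords_inv_left)

lemma comult_matrix_unit_diag: "comult (matrix_unit i i) = (\<lambda>\<alpha> \<beta>. if \<alpha> = \<beta> \<and> fst (diag_coords \<alpha>) = i then 1 else 0)"
proof (intro ext)
  fix \<alpha> \<beta>
  have "(snd (diag_coords \<alpha>) = snd (diag_coords \<beta>) \<and> fst (diag_coords \<alpha>) = fst (diag_coords \<beta>)) = (\<alpha> = \<beta>)"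
    using diag_coords_eq_iff[of \<alpha> \<beta>] by (auto simp: prod_eq_iff)
  then show "comult (matrix_unit i i) \<alpha> \<beta> = (if \<alpha> = \<beta> \<and> fst (diag_coords \<alpha>) = i then 1 else 0)"
    by (auto simp: comult_def ampl_def matrix_unit_def)
qed

lemma unital_star_hom_mpow:
  assumes h: "unital_star_hom Toeplitz B D" and A: "A \<in> Toeplitz"
  shows "D (mpow A n) = mpow (D A) n"
  using h by (induction n) (auto simp: unital_star_hom_def A mpow_toeplitz)

lemma unital_star_hom_Tnm:
  assumes h: "unital_star_hom Toeplitz B D"
  shows "D (Tnm n m) = mmult (mpow (D shiftM) n) (mpow (madj (D shiftM)) m)"
proof -
  have T: "shiftM \<in> Toeplitz" "madj shiftM \<in> Toeplitz"
    unfolding Toeplitz_def by (auto intro: closed_alg.gen)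
  have mult: "D (mmult a b) = mmult (D a) (D b)" if "a \<in> Toeplitz" "b \<in> Toeplitz" for a b
    using h that unfolding unital_star_hom_def by blast
  have adj: "D (madj shiftM) = madj (D shiftM)"
    using h T unfolding unital_star_hom_def by blast
  show ?thesis
    unfolding Tnm_def by (simp add: mult mpow_toeplitz T unital_star_hom_mpow[OF h] adj)
qed

lemma unital_star_hom_matrix_unit:
  assumes h: "unital_star_hom Toeplitz B D"
  shows "D (matrix_unit i j) = madd (D (Tnm i j)) (msmult (-1) (D (Tnm (Suc i) (Suc j))))"
proof -
  have "msmult (-1) (Tnm (Suc i) (Suc j)) \<in> Toeplitz"
    unfolding Toeplitz_def by (intro closed_alg.smult Tnm_toeplitz[unfolded Toeplitz_def])
  then show ?thesis
    using h Tnm_toeplitz unfolding matrix_unit_eq unital_star_hom_def by simp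
qed

text \<open>If D(T) = T \<otimes> T then D = \<Delta> on the Toeplitz algebra: D and \<Delta>
  agree on the matrix units, and E_{ii} x E_{jj} = x_{ij} E_{ij} together with the diagonal form
  of \<Delta>(E_{ii}) identifies each entry of D(x).\<close>
lemma comult_unique:
  assumes h: "unital_star_hom Toeplitz B D" and Ds: "D shiftM = mtensor shiftM shiftM"
    and x: "x \<in> Toeplitz"
  shows "D x = comult x"
proof (intro ext)
  fix \<alpha> \<gamma>
  have hsm: "\<And>a c. a \<in> Toeplitz \<Longrightarrow> D (msmult c a) = msmult c (D a)"
    and hmul: "\<And>a b. a \<in> Toeplitz \<Longrightarrow> b \<in> Toeplitz \<Longrightarrow> D (mmult a b) = mmult (D a) (D b)"
    using h unfolding unital_star_hom_def by auto
  have DE: "D (matrix_unit i j) = comult (matrix_unit i j)" for i j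
    by (simp add: unital_star_hom_matrix_unit[OF h] unital_star_hom_matrix_unit[OF comult_hom]
        unital_star_hom_Tnm[OF h] unital_star_hom_Tnm[OF comult_hom] Ds comult_shift)
  define i where "i = fst (diag_coords \<alpha>)"
  define j where "j = fst (diag_coords \<gamma>)"
  have Ex: "mmult (matrix_unit i i) x \<in> Toeplitz"
    unfolding Toeplitz_def
    by (intro closed_alg.mult matrix_unit_toeplitz[unfolded Toeplitz_def] x[unfolded Toeplitz_def])
  have "D (mmult (mmult (matrix_unit i i) x) (matrix_unit j j))
          = mmult (mmult (comult (matrix_unit i i)) (D x)) (comult (matrix_unit j j))"
    by (simp add: hmul Ex matrix_unit_toeplitz x DE)
  also have "\<dots> = (\<lambda>\<alpha>' \<gamma>'. if fst (diag_coords \<gamma>') = j then (if fst (diag_coords \<alpha>') = i then D x \<alpha>' \<gamma>' else 0) else 0)"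
    unfolding comult_matrix_unit_diag diag_left diag_right ..
  finally have 1: "D (mmult (mmult (matrix_unit i i) x) (matrix_unit j j)) \<alpha> \<gamma> = D x \<alpha> \<gamma>"
    by (simp add: i_def j_def)
  have "D (mmult (mmult (matrix_unit i i) x) (matrix_unit j j)) = msmult (x i j) (comult (matrix_unit i j))"
    unfolding matrix_unit_sandwich by (simp add: hsm matrix_unit_toeplitz DE)
  then have 2: "D (mmult (mmult (matrix_unit i i) x) (matrix_unit j j)) \<alpha> \<gamma> = comult x \<alpha> \<gamma>"
    by (simp add: msmult_def comult_def ampl_def matrix_unit_def i_def j_def)
  show "D x \<alpha> \<gamma> = comult x \<alpha> \<gamma>" using 1 2 by simp
qed

section \<open>Coassociativity\<close>

text \<open>Coordinates on N^3 in which \<Delta> \<otimes> id and id \<otimes> \<Delta> become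
  amplifications.\<close>
definition coords_Delta_id :: "(nat \<times> nat) \<times> nat \<Rightarrow> (nat \<times> nat) \<times> int" where
  "coords_Delta_id x = ((fst (diag_coords (fst x)), snd x), snd (diag_coords (fst x)))"

definition coords_id_Delta :: "nat \<times> (nat \<times> nat) \<Rightarrow> (nat \<times> nat) \<times> int" where
  "coords_id_Delta x = ((fst x, fst (diag_coords (snd x))), snd (diag_coords (snd x)))"

lemma bij_coords_Delta_id: "bij coords_Delta_id"
  by (rule bij_betw_byWitness[where f'="\<lambda>((r,k),d). (diag_coords_inv (r,d), k)"]) (auto simp: coords_Delta_id_def)

lemma bij_coords_id_Delta: "bij coords_id_Delta"
  by (rule bij_betw_byWitness[where f'="\<lambda>((i,r),d). (i, diag_coords_inv (r,d))"]) (auto simp: coords_id_Delta_def)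

lemma Phi_tensor: "ampl coords_Delta_id (mtensor a b) = mtensor (comult a) b"
  by (auto simp: coords_Delta_id_def mtensor_def comult_def ampl_def intro!: ext)

lemma Psi_tensor: "ampl coords_id_Delta (mtensor a b) = mtensor a (comult b)"
  by (auto simp: coords_id_Delta_def mtensor_def comult_def ampl_def intro!: ext)

text \<open>Coassociativity: after unfolding, both sides are the same condition on the three
  indices, with entries of x at min i j k.\<close>
lemma coassoc_arith:
  "(int i - int j = int i' - int j' \<and> int (min i j) - int k = int (min i' j') - int k') =
   (int j - int k = int j' - int k' \<and> int i - int (min j k) = int i' - int (min j' k'))"
  by (simp add: min_def) linarith

lemma coassoc: "ampl coords_Delta_id (comult x) = massoc (ampl coords_id_Delta (comult x))"
proof (intro ext)
  fix \<alpha> \<beta> :: "(nat \<times> nat) \<times> nat"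
  obtain i j k where a: "\<alpha> = ((i, j), k)" by (metis prod.collapse)
  obtain i' j' k' where b: "\<beta> = ((i', j'), k')" by (metis prod.collapse)
  have L: "ampl coords_Delta_id (comult x) \<alpha> \<beta> = (if (int i - int j = int i' - int j' \<and> int (min i j) - int k = int (min i' j') - int k')
     then x (min (min i j) k) (min (min i' j') k') else 0)"
    by (simp add: a b coords_Delta_id_def comult_def ampl_def diag_coords_def)
  have R: "massoc (ampl coords_id_Delta (comult x)) \<alpha> \<beta> = (if (int j - int k = int j' - int k' \<and> int i - int (min j k) = int i' - int (min j' k'))
     then x (min i (min j k)) (min i' (min j' k')) else 0)"
    by (simp add: a b massoc_def coords_id_Delta_def comult_def ampl_def diag_coords_def)
  show "ampl coords_Delta_id (comult x) \<alpha> \<beta> = massoc (ampl coords_id_Delta (comult x)) \<alpha> \<beta>"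
    unfolding L R coassoc_arith by (simp add: min.assoc)
qed

lemma Phi_maps: "x \<in> ctensor Toeplitz Toeplitz \<Longrightarrow> ampl coords_Delta_id x \<in> ctensor (ctensor Toeplitz Toeplitz) Toeplitz"
  unfolding ctensor_def[of "ctensor Toeplitz Toeplitz" Toeplitz]
  unfolding ctensor_def[of Toeplitz Toeplitz]
proof (rule ampl_closed_span[OF bij_coords_Delta_id Toeplitz_tensors_bounded])
  fix g assume "g \<in> {mtensor a b |a b. a \<in> Toeplitz \<and> b \<in> Toeplitz}"
  then obtain a b where g: "g = mtensor a b" "a \<in> Toeplitz" "b \<in> Toeplitz" by blast
  show "ampl coords_Delta_id g \<in> closed_span {mtensor a b |a b. a \<in> closed_span {mtensor a b |a b. a \<in> Toeplitz \<and> b \<in> Toeplitz} \<and> b \<in> Toeplitz}"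
    unfolding g Phi_tensor using comult_maps[OF g(2)] g(3) unfolding ctensor_def
    by (intro closed_span.gen) blast
qed

lemma Psi_maps: "x \<in> ctensor Toeplitz Toeplitz \<Longrightarrow> ampl coords_id_Delta x \<in> ctensor Toeplitz (ctensor Toeplitz Toeplitz)"
  unfolding ctensor_def[of Toeplitz "ctensor Toeplitz Toeplitz"]
  unfolding ctensor_def[of Toeplitz Toeplitz]
proof (rule ampl_closed_span[OF bij_coords_id_Delta Toeplitz_tensors_bounded])
  fix g assume "g \<in> {mtensor a b |a b. a \<in> Toeplitz \<and> b \<in> Toeplitz}"
  then obtain a b where g: "g = mtensor a b" "a \<in> Toeplitz" "b \<in> Toeplitz" by blast
  show "ampl coords_id_Delta g \<in> closed_span {mtensor a b |a b. a \<in> Toeplitz \<and> b \<in> closed_span {mtensor a b |a b. a \<in> Toeplitz \<and> b \<in> Toeplitz}}"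
    unfolding g Psi_tensor using comult_maps[OF g(3)] g(2) unfolding ctensor_def
    by (intro closed_span.gen) blast
qed

lemma Phi_hom: "unital_star_hom (ctensor Toeplitz Toeplitz) (ctensor (ctensor Toeplitz Toeplitz) Toeplitz) (ampl coords_Delta_id)"
  by (rule ampl_hom[OF bij_coords_Delta_id Phi_maps])

lemma Psi_hom: "unital_star_hom (ctensor Toeplitz Toeplitz) (ctensor Toeplitz (ctensor Toeplitz Toeplitz)) (ampl coords_id_Delta)"
  by (rule ampl_hom[OF bij_coords_id_Delta Psi_maps])

theorem theorem4:
  shows "\<exists>\<Delta> :: nat opm \<Rightarrow> (nat \<times> nat) opm.
     unital_star_hom Toeplitz (ctensor Toeplitz Toeplitz) \<Delta> \<and>
     \<Delta> shiftM = mtensor shiftM shiftM \<and>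
     (\<forall>\<Delta>'. unital_star_hom Toeplitz (ctensor Toeplitz Toeplitz) \<Delta>' \<and>
            \<Delta>' shiftM = mtensor shiftM shiftM \<longrightarrow> (\<forall>a\<in>Toeplitz. \<Delta>' a = \<Delta> a)) \<and>
     (\<forall>n m. \<Delta> (Tnm n m) = mtensor (Tnm n m) (Tnm n m)) \<and>
     (\<exists>(\<Phi> :: (nat \<times> nat) opm \<Rightarrow> ((nat \<times> nat) \<times> nat) opm)
       (\<Psi> :: (nat \<times> nat) opm \<Rightarrow> (nat \<times> (nat \<times> nat)) opm).
        unital_star_hom (ctensor Toeplitz Toeplitz) (ctensor (ctensor Toeplitz Toeplitz) Toeplitz) \<Phi> \<and>
        (\<forall>a\<in>Toeplitz. \<forall>b\<in>Toeplitz. \<Phi> (mtensor a b) = mtensor (\<Delta> a) b) \<and>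
        unital_star_hom (ctensor Toeplitz Toeplitz) (ctensor Toeplitz (ctensor Toeplitz Toeplitz)) \<Psi> \<and>
        (\<forall>a\<in>Toeplitz. \<forall>b\<in>Toeplitz. \<Psi> (mtensor a b) = mtensor a (\<Delta> b)) \<and>
        (\<forall>x\<in>Toeplitz. \<Phi> (\<Delta> x) = massoc (\<Psi> (\<Delta> x))))"
proof (intro exI[of _ comult] exI[of _ "ampl coords_Delta_id"] exI[of _ "ampl coords_id_Delta"]
    conjI allI ballI impI)
  show "unital_star_hom Toeplitz (ctensor Toeplitz Toeplitz) comult" by (rule comult_hom)
  show "comult shiftM = mtensor shiftM shiftM" by (rule comult_shift)
  show "\<Delta>' a = comult a"
    if "unital_star_hom Toeplitz (ctensor Toeplitz Toeplitz) \<Delta>' \<and> \<Delta>' shiftM = mtensor shiftM shiftM"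
      and "a \<in> Toeplitz" for \<Delta>' a
    using that comult_unique by blast
qed (simp_all add: comult_Tnm Phi_hom Psi_hom Phi_tensor Psi_tensor coassoc)

end
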